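(* Let $u\in R^{\times}$ and $a,b\in R$, and let $\mathcal{B}_{(u,a,b)}$ be the corresponding $H_N^q$-cleft extension of $R$. If $1-q\in R^{\times}$, then there exists $a'\in R$ such that $\mathcal{B}_{(u,a,b)}\cong\mathcal{B}_{(u,a',0)}$ as right $H_N^q$-comodule algebras.
   Context: $R$ is a commutative unital ring, $N\ge2$ an integer, and $q\in R$ a root of the $N$-th cyclotomic polynomial over $\mathbb{Z}$. $H_N^q$ is the Taft Hopf algebra over $R$: generated as an algebra by $g,x$ with $g^N=1$, $x^N=0$, $xg=qgx$, and $\Delta(g)=g\otimes g$, $\Delta(x)=1\otimes x+x\otimes g$, $\varepsilon(g)=1$, $\varepsilon(x)=0$, $S(g)=g^{-1}$, $S(x)=-q^{-1}g^{-1}x$. For $u\in R^{\times}$, $a,b\in R$, $\mathcal{B}_{(u,a,b)}$ is the $R$-algebra generated by $v_g,v_x$ subject to $v_g^N=u$, $v_x^N=a$, $v_xv_g=qv_gv_x+bv_g^2$; it is a free $R$-module with basis $\{v_g^mv_x^n:0\le m,n<N\}$ and a right $H_N^q$-comodule algebra via $v_g\mapsto v_g\otimes g$, $v_x\mapsto 1\otimes x+v_x\otimes g$, and it is an $H_N^q$-cleft extension of $R$ (coinvariants equal to $R$, with a convolution-invertible comodule map $H_N^q\to\mathcal{B}_{(u,a,b)}$, $g^mx^n\mapsto v_g^mv_x^n$). *)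

theory Defs
  imports "HOL-Computational_Algebra.Polynomial"
begin

text \<open>Defined by the standard recursion  X^n - 1 = prod over d dvd n of Phi_d.\<close>

function cyclo :: "nat \<Rightarrow> int poly" where
  "cyclo n = (if n = 0 then 1 else
     (monom 1 n - 1) div (\<Prod>d\<in>{d. d dvd n \<and> d < n}. cyclo d))"
  by auto
termination
  by (relation "measure id") auto

text \<open>An element sum of c(m,n) vg^m vx^n is represented by its coefficient
function c :: nat \<times> nat \<Rightarrow> 'a, which vanishes outside the box.\<close>

definition box :: "nat \<Rightarrow> (nat \<times> nat) set" where
  "box N = {..<N} \<times> {..<N}"

definition carr :: "nat \<Rightarrow> (nat \<times> nat \<Rightarrow> 'a::zero) set" where
  "carr N = {f. \<forall>p. p \<notin> box N \<longrightarrow> f p = 0}"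

definition bas :: "nat \<times> nat \<Rightarrow> nat \<times> nat \<Rightarrow> 'a::zero_neq_one" where
  "bas p = (\<lambda>s. if s = p then 1 else 0)"

definition lin_ext :: "nat \<Rightarrow> (nat \<times> nat \<Rightarrow> nat \<times> nat \<Rightarrow> 'a::comm_ring_1)
    \<Rightarrow> (nat \<times> nat \<Rightarrow> 'a) \<Rightarrow> nat \<times> nat \<Rightarrow> 'a" where
  "lin_ext N T f = (\<lambda>s. \<Sum>p\<in>box N. f p * T p s)"

section \<open>The algebra B_(u,a,b): v_g^N = u, v_x^N = a, v_x v_g = q v_g v_x + b v_g^2\<close>

text \<open>Left multiplication by v_g on the basis element v_g^m v_x^n.\<close>
definition gstep :: "nat \<Rightarrow> 'a::comm_ring_1 \<Rightarrow> nat \<times> nat \<Rightarrow> nat \<times> nat \<Rightarrow> 'a" where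
  "gstep N u p = (if Suc (fst p) = N then (\<lambda>s. u * bas (0, snd p) s)
                  else bas (Suc (fst p), snd p))"

text \<open>Left multiplication by v_x on v_g^m v_x^n, using the consequence of the defining
relation  v_x v_g^m = v_g^m (q^m v_x + b (1 + q + ... + q^(m-1)) v_g).\<close>
definition xstep :: "nat \<Rightarrow> 'a::comm_ring_1 \<Rightarrow> 'a \<Rightarrow> 'a \<Rightarrow> 'a
    \<Rightarrow> nat \<times> nat \<Rightarrow> nat \<times> nat \<Rightarrow> 'a" where
  "xstep N q u a b p = (\<lambda>s.
     q ^ fst p * (if Suc (snd p) = N then a * bas (fst p, 0) s else bas (fst p, Suc (snd p)) s)
     + (b * (\<Sum>k<fst p. q ^ k)) * gstep N u p s)"

definition Bmult :: "nat \<Rightarrow> 'a::comm_ring_1 \<Rightarrow> 'a \<Rightarrow> 'a \<Rightarrow> 'a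
    \<Rightarrow> (nat \<times> nat \<Rightarrow> 'a) \<Rightarrow> (nat \<times> nat \<Rightarrow> 'a) \<Rightarrow> nat \<times> nat \<Rightarrow> 'a" where
  "Bmult N q u a b f h = (\<lambda>s. \<Sum>p\<in>box N.
      f p * ((lin_ext N (gstep N u) ^^ fst p) ((lin_ext N (xstep N q u a b) ^^ snd p) h)) s)"

text \<open>The Taft algebra H_N^q has the same presentation as B_(1,0,0) (g = v_g, x = v_x),
 with basis g^m x^n.\<close>
abbreviation Hmult :: "nat \<Rightarrow> 'a::comm_ring_1
    \<Rightarrow> (nat \<times> nat \<Rightarrow> 'a) \<Rightarrow> (nat \<times> nat \<Rightarrow> 'a) \<Rightarrow> nat \<times> nat \<Rightarrow> 'a" where
  "Hmult N q \<equiv> Bmult N q 1 0 0"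

definition tens :: "(nat \<times> nat \<Rightarrow> 'a::comm_ring_1) \<Rightarrow> (nat \<times> nat \<Rightarrow> 'a)
    \<Rightarrow> (nat \<times> nat) \<times> (nat \<times> nat) \<Rightarrow> 'a" where
  "tens f h = (\<lambda>(s, t). f s * h t)"

definition Tmult :: "nat \<Rightarrow> 'a::comm_ring_1 \<Rightarrow> 'a \<Rightarrow> 'a \<Rightarrow> 'a
    \<Rightarrow> ((nat \<times> nat) \<times> (nat \<times> nat) \<Rightarrow> 'a) \<Rightarrow> ((nat \<times> nat) \<times> (nat \<times> nat) \<Rightarrow> 'a)
    \<Rightarrow> (nat \<times> nat) \<times> (nat \<times> nat) \<Rightarrow> 'a" where
  "Tmult N q u a b F G = (\<lambda>(s, t).
     \<Sum>(p1, r1)\<in>box N \<times> box N. \<Sum>(p2, r2)\<in>box N \<times> box N.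
        F (p1, r1) * G (p2, r2) * Bmult N q u a b (bas p1) (bas p2) s
          * Hmult N q (bas r1) (bas r2) t)"

definition Tpow :: "nat \<Rightarrow> 'a::comm_ring_1 \<Rightarrow> 'a \<Rightarrow> 'a \<Rightarrow> 'a
    \<Rightarrow> ((nat \<times> nat) \<times> (nat \<times> nat) \<Rightarrow> 'a) \<Rightarrow> nat \<Rightarrow> (nat \<times> nat) \<times> (nat \<times> nat) \<Rightarrow> 'a" where
  "Tpow N q u a b F n = (Tmult N q u a b F ^^ n) (tens (bas (0,0)) (bas (0,0)))"

section \<open>The coaction: v_g \<mapsto> v_g \<otimes> g, v_x \<mapsto> 1 \<otimes> x + v_x \<otimes> g, extended multiplicatively\<close>

definition rho_g :: "(nat \<times> nat) \<times> (nat \<times> nat) \<Rightarrow> 'a::comm_ring_1" where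
  "rho_g = tens (bas (1,0)) (bas (1,0))"

definition rho_x :: "(nat \<times> nat) \<times> (nat \<times> nat) \<Rightarrow> 'a::comm_ring_1" where
  "rho_x = (\<lambda>z. tens (bas (0,0)) (bas (0,1)) z + tens (bas (0,1)) (bas (1,0)) z)"

definition coact :: "nat \<Rightarrow> 'a::comm_ring_1 \<Rightarrow> 'a \<Rightarrow> 'a \<Rightarrow> 'a
    \<Rightarrow> (nat \<times> nat \<Rightarrow> 'a) \<Rightarrow> (nat \<times> nat) \<times> (nat \<times> nat) \<Rightarrow> 'a" where
  "coact N q u a b f = (\<lambda>z. \<Sum>p\<in>box N.
      f p * Tmult N q u a b (Tpow N q u a b rho_g (fst p)) (Tpow N q u a b rho_x (snd p)) z)"

definition tens_id :: "nat \<Rightarrow> ((nat \<times> nat \<Rightarrow> 'a::comm_ring_1) \<Rightarrow> (nat \<times> nat \<Rightarrow> 'a))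
    \<Rightarrow> ((nat \<times> nat) \<times> (nat \<times> nat) \<Rightarrow> 'a) \<Rightarrow> (nat \<times> nat) \<times> (nat \<times> nat) \<Rightarrow> 'a" where
  "tens_id N \<phi> F = (\<lambda>(s, t). \<Sum>p\<in>box N. F (p, t) * \<phi> (bas p) s)"

definition comod_alg_iso :: "nat \<Rightarrow> 'a::comm_ring_1 \<Rightarrow> 'a \<times> 'a \<times> 'a \<Rightarrow> 'a \<times> 'a \<times> 'a
    \<Rightarrow> ((nat \<times> nat \<Rightarrow> 'a) \<Rightarrow> (nat \<times> nat \<Rightarrow> 'a)) \<Rightarrow> bool" where
  "comod_alg_iso N q P P' \<phi> \<longleftrightarrow>
     (case P of (u, a, b) \<Rightarrow> case P' of (u', a', b') \<Rightarrow>
       bij_betw \<phi> (carr N) (carr N)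
     \<and> (\<forall>f\<in>carr N. \<forall>h\<in>carr N. \<phi> (\<lambda>s. f s + h s) = (\<lambda>s. \<phi> f s + \<phi> h s))
     \<and> (\<forall>c. \<forall>f\<in>carr N. \<phi> (\<lambda>s. c * f s) = (\<lambda>s. c * \<phi> f s))
     \<and> \<phi> (bas (0,0)) = bas (0,0)
     \<and> (\<forall>f\<in>carr N. \<forall>h\<in>carr N.
          \<phi> (Bmult N q u a b f h) = Bmult N q u' a' b' (\<phi> f) (\<phi> h))
     \<and> (\<forall>f\<in>carr N. coact N q u' a' b' (\<phi> f) = tens_id N \<phi> (coact N q u a b f)))"

end

theory Submission
  imports Defs
begin

text \<open>Put \<open>d = b (1 - q)\<^sup>-\<^sup>1\<close> and \<open>a' = a - d\<^sup>N u\<close>. In \<open>B\<^sub>(\<^sub>u\<^sub>,\<^sub>a\<^sub>'\<^sub>,\<^sub>0\<^sub>)\<close> the element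
  \<open>y = v\<^sub>x + d v\<^sub>g\<close> satisfies \<open>y v\<^sub>g = q v\<^sub>g y + d (1 - q) v\<^sub>g\<^sup>2 = q v\<^sub>g y + b v\<^sub>g\<^sup>2\<close>, and since
  \<open>v\<^sub>x (d v\<^sub>g) = q (d v\<^sub>g) v\<^sub>x\<close>, the \<open>q\<close>-binomial theorem gives \<open>y\<^sup>N = v\<^sub>x\<^sup>N + d\<^sup>N v\<^sub>g\<^sup>N = a' + d\<^sup>N u = a\<close>:
  the middle coefficients \<open>[N, k]\<^sub>q\<close> vanish because \<open>\<Phi>\<^sub>N\<close> divides them in \<open>\<int>[X]\<close>. So
  \<open>v\<^sub>g \<mapsto> v\<^sub>g, v\<^sub>x \<mapsto> y\<close> is an algebra map \<open>B\<^sub>(\<^sub>u\<^sub>,\<^sub>a\<^sub>,\<^sub>b\<^sub>) \<rightarrow> B\<^sub>(\<^sub>u\<^sub>,\<^sub>a\<^sub>'\<^sub>,\<^sub>0\<^sub>)\<close>; the same argument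
  with \<open>-d\<close> gives its inverse, and it is colinear because \<open>v\<^sub>g\<close> is grouplike, so
  \<open>\<rho>(y) = 1 \<otimes> x + y \<otimes> g\<close>. Since the algebras are given by structure constants, every algebra
  map is verified on the operators of left multiplication by \<open>v\<^sub>g\<close> and \<open>v\<^sub>x\<close>.\<close>

section \<open>Cyclotomic polynomials and Gaussian binomial coefficients\<close>

declare cyclo.simps[simp del]

lemma map_poly_of_int_add:
  "map_poly (of_int :: int \<Rightarrow> 'a::comm_ring_1) (p + q) = map_poly of_int p + map_poly of_int q"
  by (rule poly_eqI) (simp add: coeff_map_poly)

lemma map_poly_of_int_diff:
  "map_poly (of_int :: int \<Rightarrow> 'a::comm_ring_1) (p - q) = map_poly of_int p - map_poly of_int q"
  by (rule poly_eqI) (simp add: coeff_map_poly)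

lemma map_poly_of_int_mult:
  "map_poly (of_int :: int \<Rightarrow> 'a::comm_ring_1) (p * q) = map_poly of_int p * map_poly of_int q"
  by (rule poly_eqI) (simp add: coeff_map_poly coeff_mult of_int_sum)

lemma map_poly_of_int_prod:
  "map_poly (of_int :: int \<Rightarrow> 'a::comm_ring_1) (\<Prod>i\<in>A. f i) = (\<Prod>i\<in>A. map_poly of_int (f i))"
  by (induction A rule: infinite_finite_induct) (auto simp: map_poly_of_int_mult)

lemma map_poly_of_int_power:
  "map_poly (of_int :: int \<Rightarrow> 'a::comm_ring_1) (p ^ n) = map_poly of_int p ^ n"
  by (induction n) (auto simp: map_poly_of_int_mult)

lemma poly_map_poly_of_int_X [simp]:
  "poly (map_poly (of_int :: int \<Rightarrow> 'a::comm_ring_1) [:0, 1:]) x = x"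
  by (simp add: map_poly_pCons)

text \<open>Divisibility by a monic integer polynomial can be tested over \<open>\<complex>\<close>: the remainder of
  pseudo-division is an integer polynomial of smaller degree.\<close>
lemma monic_dvd_of_complex_dvd:
  fixes d p :: "int poly"
  assumes monic: "lead_coeff d = 1"
    and dvd: "map_poly (of_int :: int \<Rightarrow> complex) d dvd map_poly of_int p"
  shows "d dvd p"
proof -
  let ?C = "map_poly (of_int :: int \<Rightarrow> complex)"
  obtain Q R where QR: "pseudo_divmod p d = (Q, R)" by (cases "pseudo_divmod p d") auto
  have "d \<noteq> 0" using monic by auto
  from pseudo_divmod[OF this QR] monic have p_eq: "p = d * Q + R"
    and deg: "R = 0 \<or> degree R < degree d" by auto
  have "?C p = ?C d * ?C Q + ?C R"
    using p_eq by (simp add: map_poly_of_int_add map_poly_of_int_mult)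
  with dvd have dvd_R: "?C d dvd ?C R" by (metis dvd_add_right_iff dvd_triv_left)
  have "R = 0"
  proof (rule ccontr)
    assume "R \<noteq> 0"
    then have "?C R \<noteq> 0" and "degree (?C R) = degree R"
      by (auto simp: map_poly_eq_0_iff intro: map_poly_degree_eq)
    moreover have "degree (?C d) = degree d"
      using monic by (intro map_poly_degree_eq) auto
    ultimately show False
      using dvd_imp_degree_le[OF dvd_R] deg \<open>R \<noteq> 0\<close> by auto
  qed
  with p_eq show ?thesis by simp
qed

lemma prod_linear_factors_dvd:
  fixes p :: "'a::field poly"
  assumes "finite S" and "\<forall>s\<in>S. poly p s = 0"
  shows "(\<Prod>s\<in>S. [:-s, 1:]) dvd p"
  using assms
proof (induction S rule: finite_induct)
  case empty
  then show ?case by simp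
next
  case (insert x F)
  then obtain r where r: "p = (\<Prod>s\<in>F. [:-s, 1:]) * r" by (auto elim: dvdE)
  have "poly (\<Prod>s\<in>F. [:-s, 1:]) x \<noteq> 0"
    using insert(1,2) by (auto simp: poly_prod)
  with r insert.prems have "poly r x = 0" by simp
  then have "[:-x, 1:] dvd r" by (simp add: poly_eq_0_iff_dvd)
  then have "[:-x, 1:] * (\<Prod>s\<in>F. [:-s, 1:]) dvd r * (\<Prod>s\<in>F. [:-s, 1:])"
    by (rule mult_dvd_mono) simp
  then show ?case using insert(1,2) r by (simp add: mult.commute)
qed

definition primitive_roots :: "nat \<Rightarrow> complex set" where
  "primitive_roots n = {z. z ^ n = 1 \<and> (\<forall>d. 0 < d \<and> d < n \<longrightarrow> z ^ d \<noteq> 1)}"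

lemma finite_primitive_roots: "0 < n \<Longrightarrow> finite (primitive_roots n)"
  by (rule finite_subset[of _ "{z. z ^ n = 1}"])
     (auto simp: primitive_roots_def intro: finite_roots_unity)

lemma primitive_roots_disjoint:
  "0 < d \<Longrightarrow> 0 < e \<Longrightarrow> d \<noteq> e \<Longrightarrow> primitive_roots d \<inter> primitive_roots e = {}"
  unfolding primitive_roots_def by (cases "d < e") auto

lemma roots_of_unity_eq_UN_primitive_roots:
  assumes "0 < n"
  shows "{z::complex. z ^ n = 1} = (\<Union>d\<in>{d. d dvd n}. primitive_roots d)"
proof
  show "(\<Union>d\<in>{d. d dvd n}. primitive_roots d) \<subseteq> {z. z ^ n = 1}"
    by (auto simp: primitive_roots_def power_mult elim!: dvdE)
next
  show "{z. z ^ n = 1} \<subseteq> (\<Union>d\<in>{d. d dvd n}. primitive_roots d)"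
  proof
    fix z :: complex
    assume "z \<in> {z. z ^ n = 1}"
    then have zn: "0 < n \<and> z ^ n = 1" using assms by simp
    define d where "d = (LEAST d. 0 < d \<and> z ^ d = 1)"
    have d: "0 < d" "z ^ d = 1"
      using LeastI[of "\<lambda>d. 0 < d \<and> z ^ d = 1", OF zn] by (simp_all add: d_def)
    have d_least: "\<And>e. 0 < e \<Longrightarrow> z ^ e = 1 \<Longrightarrow> d \<le> e"
      unfolding d_def by (simp add: Least_le)
    have "z ^ n = z ^ (d * (n div d) + n mod d)" by simp
    also have "\<dots> = (z ^ d) ^ (n div d) * z ^ (n mod d)" by (simp only: power_add power_mult)
    finally have "z ^ n = (z ^ d) ^ (n div d) * z ^ (n mod d)" .
    then have "z ^ (n mod d) = 1" using d zn by simp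
    then have "n mod d = 0"
      using d_least[of "n mod d"] mod_less_divisor[OF d(1), of n] by (cases "n mod d = 0") auto
    moreover have "z ^ e \<noteq> 1" if "0 < e" "e < d" for e
      using d_least[OF that(1)] that(2) by fastforce
    then have "z \<in> primitive_roots d"
      using d unfolding primitive_roots_def by blast
    ultimately show "z \<in> (\<Union>d\<in>{d. d dvd n}. primitive_roots d)" by auto
  qed
qed

lemma monom_minus_one_eq_prod_roots_of_unity:
  assumes "0 < n"
  shows "(monom 1 n - 1 :: complex poly) = (\<Prod>z\<in>{z::complex. z ^ n = 1}. [:-z, 1:])"
proof (rule poly_eqI_degree_lead_coeff[where n = n and A = "{z::complex. z ^ n = 1}"])
  let ?P = "\<Prod>z\<in>{z::complex. z ^ n = 1}. [:-z, 1:]"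
  have fin: "finite {z::complex. z ^ n = 1}" using assms by (intro finite_roots_unity) auto
  have card: "card {z::complex. z ^ n = 1} = n" using assms by (rule card_roots_unity_eq)
  have deg: "degree ?P = n" using fin card by (subst degree_prod_eq_sum_degree) auto
  have "lead_coeff ?P = 1" by (simp add: lead_coeff_prod)
  then show "coeff (monom 1 n - 1 :: complex poly) n = coeff ?P n"
    using deg assms by (simp add: coeff_monom)
  show "n \<le> card {z::complex. z ^ n = 1}" using card by simp
  show "degree (monom 1 n - 1 :: complex poly) \<le> n"
    by (rule order.trans[OF degree_diff_le_max]) (auto simp: degree_monom_le)
  show "degree ?P \<le> n" using deg by simp
  show "poly (monom 1 n - 1) z = poly ?P z" if "z \<in> {z::complex. z ^ n = 1}" for z
    using fin that by (auto simp: poly_monom poly_prod)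
qed

lemma lead_coeff_monom_minus_one:
  assumes "0 < n"
  shows "lead_coeff (monom 1 n - 1 :: int poly) = 1"
proof -
  have coeff_n: "coeff (monom 1 n - 1 :: int poly) n = 1" using assms by (simp add: coeff_monom)
  have "degree (monom 1 n - 1 :: int poly) \<le> n"
    by (rule order.trans[OF degree_diff_le_max]) (auto simp: degree_monom_le)
  moreover have "n \<le> degree (monom 1 n - 1 :: int poly)" using coeff_n by (intro le_degree) simp
  ultimately show ?thesis using coeff_n by simp
qed

text \<open>\<open>X\<^sup>n - 1 = \<Prod>\<^bsub>d dvd n\<^esub> \<Phi>\<^sub>d\<close> holds over \<open>\<int>\<close> by definition and over \<open>\<complex>\<close> by grouping the
  roots of unity by their order; monicity makes the division in the definition of \<open>cyclo\<close> exact.\<close>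
lemma cyclo_monic_and_complex_roots:
  assumes "0 < n"
  shows "lead_coeff (cyclo n) = 1 \<and>
    map_poly (of_int :: int \<Rightarrow> complex) (cyclo n) = (\<Prod>z\<in>primitive_roots n. [:-z, 1:])"
  using assms
proof (induction n rule: less_induct)
  case (less n)
  let ?C = "map_poly (of_int :: int \<Rightarrow> complex)"
  define S where "S = {d. d dvd n \<and> d < n}"
  define D where "D = (\<Prod>d\<in>S. cyclo d)"
  have fin_S: "finite S" unfolding S_def by (rule finite_subset[of _ "{..<n}"]) auto
  have S_pos: "0 < d \<and> d < n" if "d \<in> S" for d
    using that less.prems unfolding S_def by (auto intro: Nat.gr0I)
  have IH: "lead_coeff (cyclo d) = 1 \<and> ?C (cyclo d) = (\<Prod>z\<in>primitive_roots d. [:-z, 1:])"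
    if "d \<in> S" for d
    using S_pos[OF that] less.IH by blast
  have monic_D: "lead_coeff D = 1" unfolding D_def using IH by (simp add: lead_coeff_prod)
  let ?U = "\<Union>d\<in>S. primitive_roots d"
  have fin_U: "finite ?U" using fin_S S_pos finite_primitive_roots by auto
  have fin_n: "finite (primitive_roots n)" using finite_primitive_roots less.prems by auto
  have disj: "?U \<inter> primitive_roots n = {}"
    using S_pos primitive_roots_disjoint[of _ n] less.prems by blast
  have "?C D = (\<Prod>d\<in>S. \<Prod>z\<in>primitive_roots d. [:-z, 1:])"
    unfolding D_def map_poly_of_int_prod using IH by simp
  also have "\<dots> = (\<Prod>z\<in>?U. [:-z, 1:])"
    by (rule prod.UNION_disjoint[symmetric])
       (use fin_S S_pos finite_primitive_roots primitive_roots_disjoint in auto)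
  finally have C_D: "?C D = (\<Prod>z\<in>?U. [:-z, 1:])" .
  have "{z::complex. z ^ n = 1} = ?U \<union> primitive_roots n"
  proof -
    have "{d. d dvd n} = insert n S"
      unfolding S_def using less.prems by (auto dest: dvd_imp_le)
    then show ?thesis
      using roots_of_unity_eq_UN_primitive_roots[OF less.prems] by auto
  qed
  then have C_Xn: "?C (monom 1 n - 1) = ?C D * (\<Prod>z\<in>primitive_roots n. [:-z, 1:])"
    using monom_minus_one_eq_prod_roots_of_unity[OF less.prems]
    by (simp add: map_poly_of_int_diff map_poly_monom C_D prod.union_disjoint[OF fin_U fin_n disj])
  have "D dvd monom 1 n - 1"
    by (rule monic_dvd_of_complex_dvd[OF monic_D]) (simp add: C_Xn)
  moreover have "cyclo n = (monom 1 n - 1) div D"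
    unfolding D_def S_def using less.prems by (subst cyclo.simps) simp
  ultimately have D_cyclo: "D * cyclo n = monom 1 n - 1" by simp
  have "?C D \<noteq> 0" unfolding C_D using fin_U by (auto simp: prod_zero_iff)
  moreover have "?C D * ?C (cyclo n) = ?C D * (\<Prod>z\<in>primitive_roots n. [:-z, 1:])"
    unfolding map_poly_of_int_mult[symmetric] D_cyclo C_Xn ..
  ultimately have "?C (cyclo n) = (\<Prod>z\<in>primitive_roots n. [:-z, 1:])" by simp
  moreover have "lead_coeff (cyclo n) = 1"
    using lead_coeff_monom_minus_one[OF less.prems] monic_D
    by (simp flip: D_cyclo add: lead_coeff_mult)
  ultimately show ?case by simp
qed

fun qbinom :: "'a::comm_ring_1 \<Rightarrow> nat \<Rightarrow> nat \<Rightarrow> 'a" where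
  "qbinom q n 0 = 1"
| "qbinom q 0 (Suc k) = 0"
| "qbinom q (Suc n) (Suc k) = qbinom q n k + q ^ Suc k * qbinom q n (Suc k)"

lemma poly_qbinom_X:
  "poly (map_poly (of_int :: int \<Rightarrow> 'a::comm_ring_1) (qbinom [:0, 1:] n k)) x = qbinom x n k"
proof (induction "[:0, 1::int:]" n k rule: qbinom.induct)
  case (3 n k)
  then show ?case
    by (simp only: qbinom.simps map_poly_of_int_add map_poly_of_int_mult map_poly_of_int_power
        poly_add poly_mult poly_power poly_map_poly_of_int_X)
qed simp_all

lemma qbinom_eq_0: "n < k \<Longrightarrow> qbinom q n k = 0"
  by (induction q n k rule: qbinom.induct) auto

lemma qbinom_self: "qbinom q n n = 1"
  by (induction n) (simp_all add: qbinom_eq_0)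

lemma qbinom_1: "qbinom q n 1 = (\<Sum>j<n. q ^ j)"
proof (induction n)
  case (Suc n)
  have "qbinom q (Suc n) 1 = 1 + q * qbinom q n 1" by (simp add: numeral_eq_Suc)
  then show ?case unfolding Suc sum.lessThan_Suc_shift by (simp add: sum_distrib_left)
qed simp

lemma qbinom_mult_prod:
  "k \<le> n \<Longrightarrow> qbinom q n k * (\<Prod>j<k. q ^ Suc j - 1) = (\<Prod>j<k. q ^ (n - j) - 1)"
proof (induction n arbitrary: k)
  case 0
  then show ?case by simp
next
  case (Suc n)
  show ?case
  proof (cases k)
    case 0
    then show ?thesis by simp
  next
    case (Suc k')
    with Suc.prems have k'_le: "k' \<le> n" by simp
    have shift: "(\<Prod>j<Suc k'. q ^ (Suc n - j) - 1) = (q ^ Suc n - 1) * (\<Prod>j<k'. q ^ (n - j) - 1)"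
      by (subst prod.lessThan_Suc_shift) simp
    have IH1: "qbinom q n k' * (\<Prod>j<Suc k'. q ^ Suc j - 1)
        = (\<Prod>j<k'. q ^ (n - j) - 1) * (q ^ Suc k' - 1)"
      using Suc.IH[OF k'_le] by (simp add: mult.assoc[symmetric])
    show ?thesis
    proof (cases "k' = n")
      case True
      then show ?thesis using Suc IH1 shift by (simp add: qbinom_eq_0 mult.commute)
    next
      case False
      with k'_le have "Suc k' \<le> n" by simp
      then have IH2: "qbinom q n (Suc k') * (\<Prod>j<Suc k'. q ^ Suc j - 1)
          = (\<Prod>j<k'. q ^ (n - j) - 1) * (q ^ (n - k') - 1)"
        using Suc.IH[OF \<open>Suc k' \<le> n\<close>] by simp
      have "Suc k' + (n - k') = Suc n" using \<open>Suc k' \<le> n\<close> by simp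
      then have pow: "q ^ Suc k' * q ^ (n - k') = q ^ Suc n" by (metis power_add)
      have "qbinom q (Suc n) k * (\<Prod>j<k. q ^ Suc j - 1)
          = qbinom q n k' * (\<Prod>j<Suc k'. q ^ Suc j - 1)
            + q ^ Suc k' * (qbinom q n (Suc k') * (\<Prod>j<Suc k'. q ^ Suc j - 1))"
        using Suc by (simp add: algebra_simps)
      also have "\<dots> = (\<Prod>j<k'. q ^ (n - j) - 1) * (q ^ Suc k' * q ^ (n - k') - 1)"
        unfolding IH1 IH2 by (simp add: algebra_simps)
      also have "\<dots> = (\<Prod>j<k. q ^ (Suc n - j) - 1)"
        unfolding pow Suc shift by (simp add: algebra_simps)
      finally show ?thesis .
    qed
  qed
qed

lemma qbinom_primitive_root_eq_0:
  assumes z: "z \<in> primitive_roots n" and k: "0 < k" "k < n"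
  shows "qbinom z n k = 0"
proof -
  have "z ^ Suc j \<noteq> 1" if "j < k" for j
  proof -
    have "0 < Suc j \<and> Suc j < n" using that k by simp
    then show ?thesis using z unfolding primitive_roots_def by blast
  qed
  then have denom: "(\<Prod>j<k. z ^ Suc j - 1) \<noteq> 0" by (simp add: prod_zero_iff)
  have "(\<Prod>j<k. z ^ (n - j) - 1) = 0"
    using k z by (intro prod_zero) (auto intro!: bexI[of _ 0] simp: primitive_roots_def)
  then have "qbinom z n k * (\<Prod>j<k. z ^ Suc j - 1) = 0"
    using qbinom_mult_prod[of k n z] k by (simp only: less_imp_le)
  with denom show ?thesis by simp
qed

lemma qbinom_cyclo_root_eq_0:
  fixes q :: "'a::comm_ring_1"
  assumes "0 < n" and q: "poly (map_poly of_int (cyclo n)) q = 0" and k: "0 < k" "k < n"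
  shows "qbinom q n k = 0"
proof -
  note cyclo = cyclo_monic_and_complex_roots[OF \<open>0 < n\<close>]
  have "cyclo n dvd qbinom [:0, 1:] n k"
  proof (rule monic_dvd_of_complex_dvd)
    show "lead_coeff (cyclo n) = 1" using cyclo by simp
    show "map_poly complex_of_int (cyclo n) dvd map_poly complex_of_int (qbinom [:0, 1:] n k)"
      unfolding cyclo[THEN conjunct2] using \<open>0 < n\<close>
      by (intro prod_linear_factors_dvd finite_primitive_roots)
         (auto simp: poly_qbinom_X qbinom_primitive_root_eq_0 k)
  qed
  then obtain r where "qbinom [:0, 1:] n k = cyclo n * r" by (elim dvdE)
  then have "poly (map_poly of_int (qbinom [:0, 1:] n k)) q = 0"
    by (simp add: map_poly_of_int_mult q)
  then show ?thesis by (simp add: poly_qbinom_X)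
qed

section \<open>Linear operators on finitely supported coefficient functions\<close>

definition delta :: "'i \<Rightarrow> 'i \<Rightarrow> 'a::comm_ring_1" where
  "delta p = (\<lambda>s. if s = p then 1 else 0)"

definition supp_in :: "'i set \<Rightarrow> ('i \<Rightarrow> 'a::comm_ring_1) set" where
  "supp_in I = {f. \<forall>p. p \<notin> I \<longrightarrow> f p = 0}"

definition lin_op :: "(('i \<Rightarrow> 'a::comm_ring_1) \<Rightarrow> ('j \<Rightarrow> 'a)) \<Rightarrow> bool" where
  "lin_op A \<longleftrightarrow> (\<forall>f g. A (\<lambda>s. f s + g s) = (\<lambda>s. A f s + A g s)) \<and>
                 (\<forall>c f. A (\<lambda>s. c * f s) = (\<lambda>s. c * A f s))"

lemma lin_op_add: "lin_op A \<Longrightarrow> A (\<lambda>s. f s + g s) = (\<lambda>s. A f s + A g s)"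
  unfolding lin_op_def by blast

lemma lin_op_scale: "lin_op A \<Longrightarrow> A (\<lambda>s. c * f s) = (\<lambda>s. c * A f s)"
  unfolding lin_op_def by blast

lemma lin_op_lincomb:
  assumes "lin_op A"
  shows "A (\<lambda>s. c * f s + d * g s) = (\<lambda>s. c * A f s + d * A g s)"
  unfolding lin_op_add[OF assms] lin_op_scale[OF assms] ..

lemma lin_op_zero: "lin_op A \<Longrightarrow> A (\<lambda>s. 0) = (\<lambda>s. 0)"
  using lin_op_scale[of A 0 "\<lambda>s. 0"] by simp

lemma lin_op_sum:
  assumes "lin_op A"
  shows "A (\<lambda>s. \<Sum>k\<in>K. c k * g k s) = (\<lambda>s. \<Sum>k\<in>K. c k * A (g k) s)"
proof (induction K rule: infinite_finite_induct)
  case (insert x F)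
  then show ?case
    using lin_op_add[OF assms] lin_op_scale[OF assms] by simp
qed (simp_all add: lin_op_zero[OF assms])

lemma lin_op_id: "lin_op (\<lambda>f. f)"
  unfolding lin_op_def by simp

lemma lin_op_comp: "lin_op A \<Longrightarrow> lin_op B \<Longrightarrow> lin_op (\<lambda>f. A (B f))"
  unfolding lin_op_def by simp

lemma lin_op_funpow:
  fixes A :: "('i \<Rightarrow> 'a::comm_ring_1) \<Rightarrow> 'i \<Rightarrow> 'a"
  assumes "lin_op A"
  shows "lin_op (A ^^ n)"
proof (induction n)
  case 0
  have "A ^^ 0 = (\<lambda>f. f)" by (rule ext) simp
  then show ?case using lin_op_id by (simp only:)
next
  case (Suc n)
  show ?case using lin_op_comp[OF assms Suc] by (simp add: comp_def)
qed

lemma lin_op_plus: "lin_op A \<Longrightarrow> lin_op B \<Longrightarrow> lin_op (\<lambda>f s. A f s + B f s)"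
  unfolding lin_op_def by (simp add: algebra_simps)

lemma lin_op_smult: "lin_op A \<Longrightarrow> lin_op (\<lambda>f s. c * A f s)"
  unfolding lin_op_def by (simp add: algebra_simps)

lemma supp_in_add: "f \<in> supp_in I \<Longrightarrow> g \<in> supp_in I \<Longrightarrow> (\<lambda>s. f s + g s) \<in> supp_in I"
  by (auto simp: supp_in_def)

lemma supp_in_sum:
  "(\<And>k. k \<in> K \<Longrightarrow> g k \<in> supp_in I) \<Longrightarrow> (\<lambda>s. \<Sum>k\<in>K. c k * g k s) \<in> supp_in I"
  by (auto simp: supp_in_def intro!: sum.neutral)

lemma supp_in_expand:
  fixes f :: "'i \<Rightarrow> 'a::comm_ring_1"
  assumes "finite I" and "f \<in> supp_in I"
  shows "f = (\<lambda>s. \<Sum>p\<in>I. f p * delta p s)"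
proof
  fix s
  show "f s = (\<Sum>p\<in>I. f p * delta p s)"
  proof (cases "s \<in> I")
    case True
    have "(\<Sum>p\<in>I. f p * delta p s) = (\<Sum>p\<in>I. if p = s then f s else 0)"
      by (rule sum.cong) (auto simp: delta_def)
    with True \<open>finite I\<close> show ?thesis by simp
  next
    case False
    then have "\<forall>p\<in>I. delta p s = (0::'a)" by (auto simp: delta_def)
    with False assms(2) show ?thesis by (simp add: supp_in_def)
  qed
qed

lemma lin_op_apply:
  assumes "finite I" "lin_op A" "f \<in> supp_in I"
  shows "A f = (\<lambda>s. \<Sum>p\<in>I. f p * A (delta p) s)"
  by (subst supp_in_expand[OF assms(1,3)]) (rule lin_op_sum[OF assms(2)])

lemma lin_op_eqI:
  assumes "finite I" "lin_op A" "lin_op B" "\<And>p. p \<in> I \<Longrightarrow> A (delta p) = B (delta p)"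
    and "f \<in> supp_in I"
  shows "A f = B f"
  using lin_op_apply[OF assms(1,2,5)] lin_op_apply[OF assms(1,3,5)] assms(4) by simp

lemma funpow_closed: "(\<And>y. y \<in> S \<Longrightarrow> A y \<in> S) \<Longrightarrow> x \<in> S \<Longrightarrow> (A ^^ k) x \<in> S"
  by (induction k) auto

lemma funpow_intertwine:
  assumes "\<And>x. x \<in> S \<Longrightarrow> P (A x) = B (P x)" and "\<And>x. x \<in> S \<Longrightarrow> A x \<in> S" and "x \<in> S"
  shows "P ((A ^^ k) x) = (B ^^ k) (P x)"
  by (induction k) (simp_all add: assms(1) funpow_closed[OF assms(2,3)])

lemma q_commute_funpow:
  assumes "lin_op A" and "\<And>f. f \<in> S \<Longrightarrow> A f \<in> S"
    and comm: "\<And>f. f \<in> S \<Longrightarrow> B (A f) = (\<lambda>s. q * A (B f) s)" and "f \<in> S"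
  shows "B ((A ^^ k) f) = (\<lambda>s. q ^ k * (A ^^ k) (B f) s)"
proof (induction k)
  case (Suc k)
  have "B ((A ^^ Suc k) f) = (\<lambda>s. q * A (B ((A ^^ k) f)) s)"
    using comm funpow_closed[of S A, OF assms(2) \<open>f \<in> S\<close>] by simp
  also have "\<dots> = (\<lambda>s. q ^ Suc k * (A ^^ Suc k) (B f) s)"
    unfolding Suc using lin_op_scale[OF assms(1)] by (simp add: mult.assoc)
  finally show ?case .
qed simp

lemma q_binomial_funpow:
  assumes A: "lin_op A" "\<And>f. f \<in> S \<Longrightarrow> A f \<in> S" and B: "lin_op B" "\<And>f. f \<in> S \<Longrightarrow> B f \<in> S"
    and comm: "\<And>f. f \<in> S \<Longrightarrow> B (A f) = (\<lambda>s. q * A (B f) s)" and f: "f \<in> S"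
  shows "((\<lambda>g s. A g s + B g s) ^^ n) f = (\<lambda>s. \<Sum>k\<le>n. qbinom q n k * (A ^^ k) ((B ^^ (n - k)) f) s)"
proof (induction n)
  case (Suc n)
  define T where "T = (\<lambda>k. (A ^^ k) ((B ^^ (Suc n - k)) f))"
  have A_step: "A ((A ^^ k) ((B ^^ (n - k)) f)) = T (Suc k)" if "k \<le> n" for k
    using that unfolding T_def by simp
  have B_step: "B ((A ^^ k) ((B ^^ (n - k)) f)) = (\<lambda>s. q ^ k * T k s)" if "k \<le> n" for k
  proof -
    have "(B ^^ (n - k)) f \<in> S" by (rule funpow_closed) (use B(2) f in auto)
    then have "B ((A ^^ k) ((B ^^ (n - k)) f)) = (\<lambda>s. q ^ k * (A ^^ k) (B ((B ^^ (n - k)) f)) s)"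
      using q_commute_funpow[where A = A and B = B and S = S and q = q, OF A comm] by blast
    also have "B ((B ^^ (n - k)) f) = (B ^^ (Suc n - k)) f"
      using that by (simp add: Suc_diff_le)
    finally show ?thesis unfolding T_def .
  qed
  have "((\<lambda>g s. A g s + B g s) ^^ Suc n) f
      = (\<lambda>s. (\<Sum>k\<le>n. qbinom q n k * A ((A ^^ k) ((B ^^ (n - k)) f)) s)
           + (\<Sum>k\<le>n. qbinom q n k * B ((A ^^ k) ((B ^^ (n - k)) f)) s))"
    using Suc by (simp add: lin_op_sum[OF A(1)] lin_op_sum[OF B(1)])
  also have "\<dots> = (\<lambda>s. (\<Sum>k\<le>n. qbinom q n k * T (Suc k) s) + (\<Sum>k\<le>n. qbinom q n k * q ^ k * T k s))"
    by (rule ext, intro arg_cong2[where f = "(+)"] sum.cong) (auto simp: A_step B_step mult.assoc)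
  also have "\<dots> = (\<lambda>s. \<Sum>k\<le>Suc n. qbinom q (Suc n) k * T k s)"
  proof
    fix s
    have "(\<Sum>k\<le>n. qbinom q n k * q ^ k * T k s)
        = T 0 s + (\<Sum>k<n. q ^ Suc k * qbinom q n (Suc k) * T (Suc k) s)"
      unfolding lessThan_Suc_atMost[symmetric] by (subst sum.lessThan_Suc_shift) (simp add: algebra_simps)
    moreover have "(\<Sum>k<n. q ^ Suc k * qbinom q n (Suc k) * T (Suc k) s)
        = (\<Sum>k\<le>n. q ^ Suc k * qbinom q n (Suc k) * T (Suc k) s)"
      by (simp add: qbinom_eq_0 flip: lessThan_Suc_atMost)
    moreover have "(\<Sum>k\<le>Suc n. qbinom q (Suc n) k * T k s)
        = T 0 s + (\<Sum>k\<le>n. qbinom q n k * T (Suc k) s)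
          + (\<Sum>k\<le>n. q ^ Suc k * qbinom q n (Suc k) * T (Suc k) s)"
      by (subst sum.atMost_Suc_shift) (simp add: algebra_simps sum.distrib)
    ultimately show "(\<Sum>k\<le>n. qbinom q n k * T (Suc k) s) + (\<Sum>k\<le>n. qbinom q n k * q ^ k * T k s)
        = (\<Sum>k\<le>Suc n. qbinom q (Suc n) k * T k s)"
      by (simp add: algebra_simps)
  qed
  finally show ?case unfolding T_def .
qed simp

lemma q_binomial_funpow_root:
  assumes A: "lin_op A" "\<And>f. f \<in> S \<Longrightarrow> A f \<in> S" and B: "lin_op B" "\<And>f. f \<in> S \<Longrightarrow> B f \<in> S"
    and comm: "\<And>f. f \<in> S \<Longrightarrow> B (A f) = (\<lambda>s. q * A (B f) s)" and f: "f \<in> S"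
    and vanish: "\<And>k. 0 < k \<Longrightarrow> k < N \<Longrightarrow> qbinom q N k = 0" and "0 < N"
  shows "((\<lambda>g s. A g s + B g s) ^^ N) f = (\<lambda>s. (A ^^ N) f s + (B ^^ N) f s)"
proof -
  have "((\<lambda>g s. A g s + B g s) ^^ N) f
      = (\<lambda>s. \<Sum>k\<le>N. qbinom q N k * (A ^^ k) ((B ^^ (N - k)) f) s)"
    by (rule q_binomial_funpow[OF A B comm f])
  also have "\<dots> = (\<lambda>s. \<Sum>k\<in>{0, N}. qbinom q N k * (A ^^ k) ((B ^^ (N - k)) f) s)"
    by (rule ext, rule sum.mono_neutral_right) (auto simp: vanish)
  finally show ?thesis using \<open>0 < N\<close> by (simp add: qbinom_self add.commute)
qed

section \<open>The algebras \<open>B\<^sub>(\<^sub>u\<^sub>,\<^sub>a\<^sub>,\<^sub>b\<^sub>)\<close> as algebras of left multiplication operators\<close>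

lemma finite_box: "finite (box N)"
  by (simp add: box_def)

lemma mem_box [simp]: "(m, n) \<in> box N \<longleftrightarrow> m < N \<and> n < N"
  by (simp add: box_def)

lemma bas_eq_delta: "bas = delta"
  by (intro ext) (simp add: bas_def delta_def)

lemma carr_eq_supp_in: "carr N = supp_in (box N)"
  by (simp add: carr_def supp_in_def)

lemma bas_in_carr: "p \<in> box N \<Longrightarrow> bas p \<in> carr N"
  by (auto simp: carr_def bas_def)

lemma carr_add:
  "(f :: nat \<times> nat \<Rightarrow> 'a::comm_ring_1) \<in> carr N \<Longrightarrow> g \<in> carr N \<Longrightarrow> (\<lambda>s. f s + g s) \<in> carr N"
  by (simp add: carr_def)

lemma carr_scale: "(f :: nat \<times> nat \<Rightarrow> 'a::comm_ring_1) \<in> carr N \<Longrightarrow> (\<lambda>s. c * f s) \<in> carr N"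
  by (simp add: carr_def)

lemma lin_op_apply_carr:
  "lin_op A \<Longrightarrow> f \<in> carr N \<Longrightarrow> A f = (\<lambda>s. \<Sum>p\<in>box N. f p * A (bas p) s)"
  unfolding carr_eq_supp_in bas_eq_delta by (rule lin_op_apply[OF finite_box])

lemma lin_op_eq_on_carr:
  assumes "lin_op A" "lin_op B" "\<And>m n. m < N \<Longrightarrow> n < N \<Longrightarrow> A (bas (m, n)) = B (bas (m, n))"
    and "f \<in> carr N"
  shows "A f = B f"
proof -
  have "A (bas p) = B (bas p)" if "p \<in> box N" for p
    using that assms(3) by (cases p) simp
  then show ?thesis
    unfolding lin_op_apply_carr[OF assms(1,4)] lin_op_apply_carr[OF assms(2,4)] by simp
qed

lemma lin_op_lin_ext: "lin_op (lin_ext N T)"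
  unfolding lin_op_def lin_ext_def by (simp add: algebra_simps sum.distrib sum_distrib_left)

lemma sum_box_bas:
  fixes F :: "nat \<times> nat \<Rightarrow> 'a::comm_ring_1"
  assumes "p \<in> box N"
  shows "(\<Sum>p'\<in>box N. bas p p' * F p') = F p"
proof -
  have "(\<Sum>p'\<in>box N. bas p p' * F p') = (\<Sum>p'\<in>box N. if p' = p then F p else 0)"
    by (rule sum.cong) (auto simp: bas_def)
  with \<open>p \<in> box N\<close> show ?thesis by (simp add: finite_box)
qed

lemma lin_ext_bas: "p \<in> box N \<Longrightarrow> lin_ext N T (bas p) = T p"
  by (rule ext) (simp add: lin_ext_def sum_box_bas)

lemma lin_ext_in_carr: "(\<And>p. p \<in> box N \<Longrightarrow> T p \<in> carr N) \<Longrightarrow> lin_ext N T f \<in> carr N"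
  unfolding lin_ext_def carr_def by (auto intro!: sum.neutral)

definition q_int :: "'a::comm_ring_1 \<Rightarrow> nat \<Rightarrow> 'a" where
  "q_int q m = (\<Sum>k<m. q ^ k)"

lemma q_int_0 [simp]: "q_int q 0 = 0"
  by (simp add: q_int_def)

lemma q_int_Suc: "q_int q (Suc m) = 1 + q * q_int q m"
  unfolding q_int_def sum.lessThan_Suc_shift by (simp add: sum_distrib_left)

definition lmul_g :: "nat \<Rightarrow> 'a::comm_ring_1 \<Rightarrow> (nat \<times> nat \<Rightarrow> 'a) \<Rightarrow> nat \<times> nat \<Rightarrow> 'a" where
  "lmul_g N u = lin_ext N (gstep N u)"

definition lmul_x :: "nat \<Rightarrow> 'a::comm_ring_1 \<Rightarrow> 'a \<Rightarrow> 'a \<Rightarrow> 'a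
    \<Rightarrow> (nat \<times> nat \<Rightarrow> 'a) \<Rightarrow> nat \<times> nat \<Rightarrow> 'a" where
  "lmul_x N q u a b = lin_ext N (xstep N q u a b)"

definition bas_mult_x :: "nat \<Rightarrow> 'a::comm_ring_1 \<Rightarrow> nat \<Rightarrow> nat \<Rightarrow> nat \<times> nat \<Rightarrow> 'a" where
  "bas_mult_x N a m n = (if Suc n = N then (\<lambda>s. a * bas (m, 0) s) else bas (m, Suc n))"

lemma gstep_in_carr: "p \<in> box N \<Longrightarrow> gstep N u p \<in> carr N"
  by (cases p) (auto simp: gstep_def carr_def bas_def)

lemma bas_mult_x_in_carr: "m < N \<Longrightarrow> n < N \<Longrightarrow> bas_mult_x N a m n \<in> carr N"
  by (auto simp: bas_mult_x_def intro!: bas_in_carr carr_scale)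

lemma xstep_in_carr: "p \<in> box N \<Longrightarrow> xstep N q u a b p \<in> carr N"
proof (cases p)
  case (Pair m n)
  assume "p \<in> box N"
  have "xstep N q u a b p
      = (\<lambda>s. q ^ m * bas_mult_x N a m n s + (b * (\<Sum>k<m. q ^ k)) * gstep N u (m, n) s)"
    unfolding Pair xstep_def bas_mult_x_def by (rule ext) auto
  then show ?thesis using \<open>p \<in> box N\<close> Pair gstep_in_carr[of "(m, n)" N u]
    by (auto intro!: carr_add carr_scale bas_mult_x_in_carr)
qed

lemma lin_op_lmul_g: "lin_op (lmul_g N u)"
  by (simp add: lmul_g_def lin_op_lin_ext)

lemma lin_op_lmul_x: "lin_op (lmul_x N q u a b)"
  by (simp add: lmul_x_def lin_op_lin_ext)

lemma lmul_g_in_carr: "lmul_g N u f \<in> carr N"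
  unfolding lmul_g_def by (rule lin_ext_in_carr) (rule gstep_in_carr)

lemma lmul_x_in_carr: "lmul_x N q u a b f \<in> carr N"
  unfolding lmul_x_def by (rule lin_ext_in_carr) (rule xstep_in_carr)

lemma lmul_g_bas: "m < N \<Longrightarrow> n < N \<Longrightarrow>
    lmul_g N u (bas (m, n)) = (if Suc m = N then (\<lambda>s. u * bas (0, n) s) else bas (Suc m, n))"
  unfolding lmul_g_def by (simp add: lin_ext_bas gstep_def)

lemma lmul_x_bas: "m < N \<Longrightarrow> n < N \<Longrightarrow>
    lmul_x N q u a b (bas (m, n))
      = (\<lambda>s. q ^ m * bas_mult_x N a m n s + b * q_int q m * lmul_g N u (bas (m, n)) s)"
  unfolding lmul_x_def
  by (rule ext) (simp add: lin_ext_bas xstep_def bas_mult_x_def q_int_def lmul_g_bas gstep_def)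

lemma lin_op_Bmult_left: "lin_op (\<lambda>f. Bmult N q u a b f h)"
  unfolding lin_op_def Bmult_def by (simp add: algebra_simps sum.distrib sum_distrib_left)

lemma Bmult_bas:
  "p \<in> box N \<Longrightarrow> Bmult N q u a b (bas p) h = (lmul_g N u ^^ fst p) ((lmul_x N q u a b ^^ snd p) h)"
  by (rule ext) (simp add: Bmult_def lmul_g_def lmul_x_def sum_box_bas)

lemma lmul_g_funpow_bas:
  "m + j < N \<Longrightarrow> n < N \<Longrightarrow> (lmul_g N u ^^ j) (bas (m, n)) = bas (m + j, n)"
  by (induction j) (auto simp: lmul_g_bas)

lemma lmul_g_funpow_N_bas:
  assumes "m < N" "n < N"
  shows "(lmul_g N u ^^ N) (bas (m, n)) = (\<lambda>s. u * bas (m, n) s)"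
proof -
  obtain r where r: "N = m + Suc r" using less_imp_Suc_add[OF assms(1)] by auto
  have "(lmul_g N u ^^ N) (bas (m, n)) = (lmul_g N u ^^ m) (lmul_g N u ((lmul_g N u ^^ r) (bas (m, n))))"
    unfolding r funpow_add by simp
  also have "(lmul_g N u ^^ r) (bas (m, n)) = bas (m + r, n)"
    using r assms by (intro lmul_g_funpow_bas) auto
  also have "lmul_g N u (bas (m + r, n)) = (\<lambda>s. u * bas (0, n) s)"
    using r assms by (subst lmul_g_bas) auto
  also have "(lmul_g N u ^^ m) (\<lambda>s. u * bas (0, n) s) = (\<lambda>s. u * (lmul_g N u ^^ m) (bas (0, n)) s)"
    by (rule lin_op_scale[OF lin_op_funpow[OF lin_op_lmul_g]])
  also have "(lmul_g N u ^^ m) (bas (0, n)) = bas (m, n)"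
    using lmul_g_funpow_bas[of 0 m N n u] assms by simp
  finally show ?thesis .
qed

lemma lmul_g_funpow_N: "f \<in> carr N \<Longrightarrow> (lmul_g N u ^^ N) f = (\<lambda>s. u * f s)"
  by (rule lin_op_eq_on_carr[OF lin_op_funpow[OF lin_op_lmul_g] lin_op_smult[OF lin_op_id]])
     (simp_all add: lmul_g_funpow_N_bas)

lemma lmul_g_funpow_in_carr: "f \<in> carr N \<Longrightarrow> (lmul_g N u ^^ k) f \<in> carr N"
  by (rule funpow_closed) (simp_all add: lmul_g_in_carr)

lemma lmul_x_funpow_in_carr: "f \<in> carr N \<Longrightarrow> (lmul_x N q u a b ^^ k) f \<in> carr N"
  by (rule funpow_closed) (simp_all add: lmul_x_in_carr)

text \<open>The only property of a root \<open>q\<close> of \<open>\<Phi>\<^sub>N\<close> that is used: the Gaussian binomials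
  \<open>[N, k]\<^sub>q\<close> with \<open>0 < k < N\<close> vanish (see \<open>qbinom_cyclo_root_eq_0\<close>).\<close>
locale taft_root =
  fixes N :: nat and q :: "'a::comm_ring_1"
  assumes two_le_N: "2 \<le> N"
    and qbinom_vanish: "\<And>k. 0 < k \<Longrightarrow> k < N \<Longrightarrow> qbinom q N k = 0"
begin

lemma N_pos: "0 < N"
  using two_le_N by simp

lemma q_int_N: "q_int q N = 0"
  using qbinom_vanish[of 1] qbinom_1[of q N] two_le_N by (simp add: q_int_def)

lemma q_pow_N: "q ^ N = 1"
  using one_diff_power_eq[of q N] q_int_N by (simp add: q_int_def)

lemma one_in_carr: "bas (0, 0) \<in> carr N"
  using N_pos by (simp add: bas_in_carr)

lemma lmul_x_lmul_g_bas:
  assumes "m < N" "n < N"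
  shows "lmul_x N q u a b (lmul_g N u (bas (m, n))) =
     (\<lambda>s. q * lmul_g N u (lmul_x N q u a b (bas (m, n))) s + b * lmul_g N u (lmul_g N u (bas (m, n))) s)"
proof (cases "Suc m = N")
  case False
  then have "Suc m < N" using assms by simp
  have g: "lmul_g N u (bas (m, n)) = bas (Suc m, n)" using assms False by (simp add: lmul_g_bas)
  have gx: "lmul_g N u (bas_mult_x N a m n) = bas_mult_x N a (Suc m) n"
    using \<open>Suc m < N\<close> assms
    by (auto simp: bas_mult_x_def lin_op_scale[OF lin_op_lmul_g] lmul_g_bas)
  show ?thesis
    using \<open>Suc m < N\<close> assms
    by (simp add: g lmul_x_bas lin_op_lincomb[OF lin_op_lmul_g] lin_op_scale[OF lin_op_lmul_g] gx
        q_int_Suc algebra_simps)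
next
  case True
  have g: "lmul_g N u (bas (m, n)) = (\<lambda>s. u * bas (0, n) s)" using assms True by (simp add: lmul_g_bas)
  have gx: "lmul_g N u (bas_mult_x N a m n) = (\<lambda>s. u * bas_mult_x N a 0 n s)"
    using True assms by (auto simp: bas_mult_x_def lin_op_scale[OF lin_op_lmul_g] lmul_g_bas)
  let ?W = "bas_mult_x N a 0 n" and ?G0 = "lmul_g N u (bas (0, n))"
  have q_m: "q * q ^ m = 1" using q_pow_N True by (metis power_Suc)
  have q_int_m: "1 + q * q_int q m = 0" using q_int_N True q_int_Suc by metis
  have lhs: "lmul_x N q u a b (lmul_g N u (bas (m, n))) = (\<lambda>s. u * ?W s)"
    using assms by (simp add: g lin_op_scale[OF lin_op_lmul_x] lmul_x_bas)
  have x: "lmul_x N q u a b (bas (m, n))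
      = (\<lambda>s. q ^ m * bas_mult_x N a m n s + (b * q_int q m * u) * bas (0, n) s)"
    using assms g by (simp add: lmul_x_bas algebra_simps)
  have rhs: "lmul_g N u (lmul_x N q u a b (bas (m, n)))
      = (\<lambda>s. q ^ m * (u * ?W s) + (b * q_int q m * u) * ?G0 s)"
    unfolding x lin_op_lincomb[OF lin_op_lmul_g] gx by (simp add: mult.assoc)
  have pointwise: "u * ?W s = q * (q ^ m * (u * ?W s) + b * q_int q m * u * ?G0 s) + b * (u * ?G0 s)"
    for s
  proof -
    have "q * (q ^ m * (u * ?W s) + b * q_int q m * u * ?G0 s) + b * (u * ?G0 s)
        = (q * q ^ m) * (u * ?W s) + (1 + q * q_int q m) * (b * u * ?G0 s)"
      by (simp add: algebra_simps)
    then show ?thesis unfolding q_m q_int_m by simp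
  qed
  show ?thesis
    unfolding lhs rhs unfolding g lin_op_scale[OF lin_op_lmul_g] by (intro ext) (rule pointwise)
qed

lemma lmul_x_lmul_g:
  "f \<in> carr N \<Longrightarrow> lmul_x N q u a b (lmul_g N u f) =
     (\<lambda>s. q * lmul_g N u (lmul_x N q u a b f) s + b * lmul_g N u (lmul_g N u f) s)"
  by (rule lin_op_eq_on_carr[OF lin_op_comp[OF lin_op_lmul_x lin_op_lmul_g]
        lin_op_plus[OF lin_op_smult[OF lin_op_comp[OF lin_op_lmul_g lin_op_lmul_x]]
          lin_op_smult[OF lin_op_comp[OF lin_op_lmul_g lin_op_lmul_g]]]])
     (simp_all add: lmul_x_lmul_g_bas)

lemma lmul_x0_funpow_bas:
  "n + j < N \<Longrightarrow> m < N \<Longrightarrow>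
    (lmul_x N q u a 0 ^^ j) (bas (m, n)) = (\<lambda>s. q ^ (m * j) * bas (m, n + j) s)"
proof (induction j)
  case (Suc j)
  then show ?case
    by (simp add: lin_op_scale[OF lin_op_lmul_x] lmul_x_bas bas_mult_x_def power_add mult.assoc
        mult.left_commute)
qed simp

lemma lmul_x0_funpow_N_bas:
  assumes "m < N" "n < N"
  shows "(lmul_x N q u a 0 ^^ N) (bas (m, n)) = (\<lambda>s. a * bas (m, n) s)"
proof -
  let ?X = "lmul_x N q u a 0"
  obtain r where r: "N = n + Suc r" using less_imp_Suc_add[OF assms(2)] by auto
  have "(?X ^^ N) (bas (m, n)) = (?X ^^ n) (?X ((?X ^^ r) (bas (m, n))))"
    unfolding r funpow_add by simp
  also have "(?X ^^ r) (bas (m, n)) = (\<lambda>s. q ^ (m * r) * bas (m, n + r) s)"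
    using r assms by (intro lmul_x0_funpow_bas) auto
  also have "?X (\<lambda>s. q ^ (m * r) * bas (m, n + r) s) = (\<lambda>s. (q ^ (m * r) * q ^ m * a) * bas (m, 0) s)"
    using r assms by (simp add: lin_op_scale[OF lin_op_lmul_x] lmul_x_bas bas_mult_x_def mult.assoc)
  also have "(?X ^^ n) \<dots> = (\<lambda>s. (q ^ (m * r) * q ^ m * a) * (?X ^^ n) (bas (m, 0)) s)"
    by (rule lin_op_scale[OF lin_op_funpow[OF lin_op_lmul_x]])
  also have "\<dots> = (\<lambda>s. (q ^ (m * r) * q ^ m * a * q ^ (m * n)) * bas (m, n) s)"
    using lmul_x0_funpow_bas[of 0 n m u a] assms by (simp add: mult.assoc)
  also have "q ^ (m * r) * q ^ m * a * q ^ (m * n) = a * (q ^ N) ^ m"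
    unfolding r by (simp add: power_add power_mult[symmetric] algebra_simps)
  finally show ?thesis using q_pow_N by simp
qed

lemma lmul_x0_funpow_N: "f \<in> carr N \<Longrightarrow> (lmul_x N q u a 0 ^^ N) f = (\<lambda>s. a * f s)"
  by (rule lin_op_eq_on_carr[OF lin_op_funpow[OF lin_op_lmul_x] lin_op_smult[OF lin_op_id]])
     (simp_all add: lmul_x0_funpow_N_bas)

lemma lmul_x_funpow_one: "n < N \<Longrightarrow> (lmul_x N q u a b ^^ n) (bas (0, 0)) = bas (0, n)"
  by (induction n) (auto simp: lmul_x_bas bas_mult_x_def N_pos)

lemma lmul_x_funpow_N_one: "(lmul_x N q u a b ^^ N) (bas (0, 0)) = (\<lambda>s. a * bas (0, 0) s)"
proof -
  obtain r where r: "N = Suc r" using N_pos by (cases N) auto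
  then show ?thesis using lmul_x_funpow_one[of r u a b] by (simp add: lmul_x_bas bas_mult_x_def)
qed

lemma commute_funpow_lmul_g:
  assumes comm: "\<And>f. f \<in> carr N \<Longrightarrow>
      Y (lmul_g N u f) = (\<lambda>s. q * lmul_g N u (Y f) s + c * lmul_g N u (lmul_g N u f) s)"
    and f: "f \<in> carr N"
  shows "Y ((lmul_g N u ^^ m) f)
    = (\<lambda>s. q ^ m * (lmul_g N u ^^ m) (Y f) s + c * q_int q m * (lmul_g N u ^^ Suc m) f s)"
proof (induction m)
  case (Suc m)
  have "Y ((lmul_g N u ^^ Suc m) f)
      = (\<lambda>s. q * lmul_g N u (Y ((lmul_g N u ^^ m) f)) s + c * (lmul_g N u ^^ Suc (Suc m)) f s)"
    using comm[OF lmul_g_funpow_in_carr[OF f]] by simp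
  also have "\<dots> = (\<lambda>s. q ^ Suc m * (lmul_g N u ^^ Suc m) (Y f) s
      + c * q_int q (Suc m) * (lmul_g N u ^^ Suc (Suc m)) f s)"
    unfolding Suc lin_op_lincomb[OF lin_op_lmul_g] by (simp add: q_int_Suc algebra_simps)
  finally show ?case .
qed simp

end

section \<open>The change of variables \<open>v\<^sub>x \<mapsto> v\<^sub>x + d v\<^sub>g\<close>\<close>

definition lmul_y :: "nat \<Rightarrow> 'a::comm_ring_1 \<Rightarrow> 'a \<Rightarrow> 'a \<Rightarrow> 'a \<Rightarrow> 'a
    \<Rightarrow> (nat \<times> nat \<Rightarrow> 'a) \<Rightarrow> nat \<times> nat \<Rightarrow> 'a" where
  "lmul_y N q u a b d = (\<lambda>f s. d * lmul_g N u f s + lmul_x N q u a b f s)"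

text \<open>\<open>shift_map N q u a b d\<close> sends \<open>v\<^sub>g\<^sup>m v\<^sub>x\<^sup>n\<close> (of whichever algebra \<open>B\<^sub>(\<^sub>u\<^sub>,\<^sub>a\<^sub>'\<^sub>,\<^sub>b\<^sub>'\<^sub>)\<close> is
  the source) to \<open>v\<^sub>g\<^sup>m (v\<^sub>x + d v\<^sub>g)\<^sup>n\<close> computed in \<open>B\<^sub>(\<^sub>u\<^sub>,\<^sub>a\<^sub>,\<^sub>b\<^sub>)\<close>.\<close>
definition shift_map :: "nat \<Rightarrow> 'a::comm_ring_1 \<Rightarrow> 'a \<Rightarrow> 'a \<Rightarrow> 'a \<Rightarrow> 'a
    \<Rightarrow> (nat \<times> nat \<Rightarrow> 'a) \<Rightarrow> nat \<times> nat \<Rightarrow> 'a" where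
  "shift_map N q u a b d =
     lin_ext N (\<lambda>p. (lmul_g N u ^^ fst p) ((lmul_y N q u a b d ^^ snd p) (bas (0, 0))))"

lemma lin_op_lmul_y: "lin_op (lmul_y N q u a b d)"
  unfolding lmul_y_def by (rule lin_op_plus[OF lin_op_smult[OF lin_op_lmul_g] lin_op_lmul_x])

lemma lmul_y_in_carr: "lmul_y N q u a b d f \<in> carr N"
  unfolding lmul_y_def by (intro carr_add carr_scale lmul_g_in_carr lmul_x_in_carr)

lemma lmul_y_funpow_in_carr: "f \<in> carr N \<Longrightarrow> (lmul_y N q u a b d ^^ k) f \<in> carr N"
  by (rule funpow_closed) (simp_all add: lmul_y_in_carr)

lemma lin_op_shift_map: "lin_op (shift_map N q u a b d)"
  unfolding shift_map_def by (rule lin_op_lin_ext)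

lemma shift_map_bas:
  "p \<in> box N \<Longrightarrow>
    shift_map N q u a b d (bas p) = (lmul_g N u ^^ fst p) ((lmul_y N q u a b d ^^ snd p) (bas (0, 0)))"
  unfolding shift_map_def by (rule lin_ext_bas)

context taft_root
begin

lemma shift_map_in_carr: "shift_map N q u a b d f \<in> carr N"
  unfolding shift_map_def
  by (rule lin_ext_in_carr) (intro lmul_g_funpow_in_carr lmul_y_funpow_in_carr one_in_carr)

lemma shift_map_one: "shift_map N q u a b d (bas (0, 0)) = bas (0, 0)"
  using N_pos by (simp add: shift_map_bas)

lemma lmul_y_lmul_g:
  "f \<in> carr N \<Longrightarrow> lmul_y N q u a b d (lmul_g N u f) =
    (\<lambda>s. q * lmul_g N u (lmul_y N q u a b d f) s + (b + d * (1 - q)) * lmul_g N u (lmul_g N u f) s)"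
  unfolding lmul_y_def using lmul_x_lmul_g[of f u a b]
  by (simp add: lin_op_add[OF lin_op_lmul_g] lin_op_scale[OF lin_op_lmul_g] algebra_simps)

lemma shift_map_lmul_g:
  assumes "f \<in> carr N"
  shows "shift_map N q u a b d (lmul_g N u f) = lmul_g N u (shift_map N q u a b d f)"
proof (rule lin_op_eq_on_carr[OF lin_op_comp[OF lin_op_shift_map lin_op_lmul_g]
      lin_op_comp[OF lin_op_lmul_g lin_op_shift_map] _ assms])
  fix m n assume mn: "m < N" "n < N"
  let ?G = "lmul_g N u" and ?Y = "lmul_y N q u a b d" and ?P = "shift_map N q u a b d"
  show "?P (?G (bas (m, n))) = ?G (?P (bas (m, n)))"
  proof (cases "Suc m = N")
    case False
    then show ?thesis using mn by (simp add: lmul_g_bas shift_map_bas)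
  next
    case True
    have "?P (?G (bas (m, n))) = (\<lambda>s. u * (?Y ^^ n) (bas (0, 0)) s)"
      using mn True N_pos by (simp add: lmul_g_bas lin_op_scale[OF lin_op_shift_map] shift_map_bas)
    also have "\<dots> = (?G ^^ N) ((?Y ^^ n) (bas (0, 0)))"
      by (rule lmul_g_funpow_N[symmetric]) (rule lmul_y_funpow_in_carr[OF one_in_carr])
    also have "\<dots> = ?G (?P (bas (m, n)))"
      using mn True by (simp add: shift_map_bas del: funpow.simps) (metis funpow.simps(2) o_apply)
    finally show ?thesis .
  qed
qed

text \<open>The key step: in \<open>B\<^sub>(\<^sub>u\<^sub>,\<^sub>a\<^sub>2\<^sub>,\<^sub>b\<^sub>2\<^sub>)\<close>, \<open>y = v\<^sub>x + d v\<^sub>g\<close> satisfies \<open>y v\<^sub>g = q v\<^sub>g y + b\<^sub>1 v\<^sub>g\<^sup>2\<close> with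
  \<open>b\<^sub>1 = b\<^sub>2 + d (1 - q)\<close>, so \<open>v\<^sub>x \<mapsto> y\<close> respects the relations of \<open>B\<^sub>(\<^sub>u\<^sub>,\<^sub>a\<^sub>1\<^sub>,\<^sub>b\<^sub>1\<^sub>)\<close> once
  \<open>y\<^sup>N = a\<^sub>1\<close>.\<close>
lemma shift_map_lmul_x:
  assumes b1: "b1 = b2 + d * (1 - q)"
    and y_pow_N: "(lmul_y N q u a2 b2 d ^^ N) (bas (0, 0)) = (\<lambda>s. a1 * bas (0, 0) s)"
    and "f \<in> carr N"
  shows "shift_map N q u a2 b2 d (lmul_x N q u a1 b1 f) = lmul_y N q u a2 b2 d (shift_map N q u a2 b2 d f)"
proof (rule lin_op_eq_on_carr[OF lin_op_comp[OF lin_op_shift_map lin_op_lmul_x]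
      lin_op_comp[OF lin_op_lmul_y lin_op_shift_map] _ \<open>f \<in> carr N\<close>])
  fix m n assume mn: "m < N" "n < N"
  let ?G = "lmul_g N u" and ?Y = "lmul_y N q u a2 b2 d" and ?P = "shift_map N q u a2 b2 d"
  have y_g: "\<And>f. f \<in> carr N \<Longrightarrow> ?Y (?G f) = (\<lambda>s. q * ?G (?Y f) s + b1 * ?G (?G f) s)"
    unfolding b1 by (rule lmul_y_lmul_g)
  have rhs: "?Y (?P (bas (m, n))) = (\<lambda>s. q ^ m * (?G ^^ m) ((?Y ^^ Suc n) (bas (0, 0))) s
      + b1 * q_int q m * ?G (?P (bas (m, n))) s)"
    using commute_funpow_lmul_g[OF y_g lmul_y_funpow_in_carr[OF one_in_carr], of m n] mn
    by (simp add: shift_map_bas)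
  have lhs: "?P (lmul_x N q u a1 b1 (bas (m, n)))
      = (\<lambda>s. q ^ m * ?P (bas_mult_x N a1 m n) s + b1 * q_int q m * ?G (?P (bas (m, n))) s)"
    using mn by (simp add: lmul_x_bas lin_op_lincomb[OF lin_op_shift_map] shift_map_lmul_g bas_in_carr)
  have "?P (bas_mult_x N a1 m n) = (?G ^^ m) ((?Y ^^ Suc n) (bas (0, 0)))"
  proof (cases "Suc n = N")
    case True
    have "?P (bas_mult_x N a1 m n) = (\<lambda>s. a1 * (?G ^^ m) (bas (0, 0)) s)"
      using mn True by (simp add: bas_mult_x_def lin_op_scale[OF lin_op_shift_map] shift_map_bas)
    also have "\<dots> = (?G ^^ m) (\<lambda>s. a1 * bas (0, 0) s)"
      by (rule lin_op_scale[OF lin_op_funpow[OF lin_op_lmul_g], symmetric])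
    finally show ?thesis using y_pow_N True by simp
  next
    case False
    then show ?thesis using mn by (simp add: bas_mult_x_def shift_map_bas)
  qed
  then show "?P (lmul_x N q u a1 b1 (bas (m, n))) = ?Y (?P (bas (m, n)))"
    unfolding lhs rhs by simp
qed

lemma lmul_smult_g_funpow:
  "((\<lambda>g s. d * lmul_g N u g s) ^^ k) f = (\<lambda>s. d ^ k * (lmul_g N u ^^ k) f s)"
  by (induction k) (simp_all add: lin_op_scale[OF lin_op_lmul_g] mult.assoc)

text \<open>Both \<open>y\<^sup>N\<close> computations are the \<open>q\<close>-binomial theorem: \<open>(d v\<^sub>g + v\<^sub>x)\<^sup>N = d\<^sup>N u + v\<^sub>x\<^sup>N\<close>
  when \<open>v\<^sub>x v\<^sub>g = q v\<^sub>g v\<^sub>x\<close>.\<close>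
lemma lmul_y_funpow_N_b0:
  "(lmul_y N q u (a - d ^ N * u) 0 d ^^ N) (bas (0, 0)) = (\<lambda>s. a * bas (0, 0) s)"
proof -
  let ?A = "\<lambda>g s. d * lmul_g N u g s" and ?B = "lmul_x N q u (a - d ^ N * u) 0"
  have comm: "?B (?A f) = (\<lambda>s. q * ?A (?B f) s)" if "f \<in> carr N" for f
    using lmul_x_lmul_g[OF that, of u "a - d ^ N * u" 0]
    by (simp add: lin_op_scale[OF lin_op_lmul_x] algebra_simps)
  have "(lmul_y N q u (a - d ^ N * u) 0 d ^^ N) (bas (0, 0)) = ((\<lambda>g s. ?A g s + ?B g s) ^^ N) (bas (0, 0))"
    by (simp add: lmul_y_def)
  also have "\<dots> = (\<lambda>s. (?A ^^ N) (bas (0, 0)) s + (?B ^^ N) (bas (0, 0)) s)"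
    by (rule q_binomial_funpow_root[OF lin_op_smult[OF lin_op_lmul_g] _ lin_op_lmul_x _ comm
          one_in_carr qbinom_vanish N_pos])
       (simp_all add: carr_scale lmul_g_in_carr lmul_x_in_carr)
  also have "\<dots> = (\<lambda>s. a * bas (0, 0) s)"
    by (simp add: lmul_smult_g_funpow lmul_g_funpow_N[OF one_in_carr] lmul_x0_funpow_N[OF one_in_carr]
        algebra_simps)
  finally show ?thesis .
qed

lemma shift_map_lmul_x_b0:
  assumes "b = d * (1 - q)" and "f \<in> carr N"
  shows "shift_map N q u (a - d ^ N * u) 0 d (lmul_x N q u a b f)
    = lmul_y N q u (a - d ^ N * u) 0 d (shift_map N q u (a - d ^ N * u) 0 d f)"
  by (rule shift_map_lmul_x) (use assms lmul_y_funpow_N_b0 in auto)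

lemma lmul_y_funpow_N:
  assumes "b = d * (1 - q)"
  shows "(lmul_y N q u a b (- d) ^^ N) (bas (0, 0)) = (\<lambda>s. (a - d ^ N * u) * bas (0, 0) s)"
proof -
  let ?A = "\<lambda>g s. d * lmul_g N u g s" and ?B = "lmul_y N q u a b (- d)"
  have comm: "?B (?A f) = (\<lambda>s. q * ?A (?B f) s)" if "f \<in> carr N" for f
  proof -
    have "?B (?A f) = (\<lambda>s. d * ?B (lmul_g N u f) s)" by (rule lin_op_scale[OF lin_op_lmul_y])
    also have "\<dots> = (\<lambda>s. d * (q * lmul_g N u (?B f) s
        + (b + - d * (1 - q)) * lmul_g N u (lmul_g N u f) s))"
      unfolding lmul_y_lmul_g[OF that] ..
    finally show ?thesis using assms by (simp add: mult.left_commute)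
  qed
  have sum_x: "(\<lambda>g s. ?A g s + ?B g s) = lmul_x N q u a b"
    by (intro ext) (simp add: lmul_y_def)
  have "(\<lambda>s. a * bas (0, 0) s) = ((\<lambda>g s. ?A g s + ?B g s) ^^ N) (bas (0, 0))"
    unfolding sum_x by (rule lmul_x_funpow_N_one[symmetric])
  also have "\<dots> = (\<lambda>s. (?A ^^ N) (bas (0, 0)) s + (?B ^^ N) (bas (0, 0)) s)"
    by (rule q_binomial_funpow_root[OF lin_op_smult[OF lin_op_lmul_g] _ lin_op_lmul_y _ comm
          one_in_carr qbinom_vanish N_pos])
       (simp_all add: carr_scale lmul_g_in_carr lmul_y_in_carr)
  also have "\<dots> = (\<lambda>s. d ^ N * u * bas (0, 0) s + (?B ^^ N) (bas (0, 0)) s)"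
    by (simp add: lmul_smult_g_funpow lmul_g_funpow_N[OF one_in_carr] mult.assoc)
  finally have "a * bas (0, 0) s = d ^ N * u * bas (0, 0) s + (?B ^^ N) (bas (0, 0)) s" for s
    by metis
  then show ?thesis by (auto simp: algebra_simps intro!: ext)
qed

lemma shift_map_inverse:
  assumes d: "d1 + d2 = 0"
    and g_hom: "\<And>f. f \<in> carr N \<Longrightarrow>
      shift_map N q u aS bS d2 (lmul_g N u f) = lmul_g N u (shift_map N q u aS bS d2 f)"
    and x_hom: "\<And>f. f \<in> carr N \<Longrightarrow>
      shift_map N q u aS bS d2 (lmul_x N q u aT bT f) = lmul_y N q u aS bS d2 (shift_map N q u aS bS d2 f)"
    and "f \<in> carr N"
  shows "shift_map N q u aS bS d2 (shift_map N q u aT bT d1 f) = f"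
proof (rule lin_op_eq_on_carr[OF lin_op_comp[OF lin_op_shift_map lin_op_shift_map] lin_op_id _
      \<open>f \<in> carr N\<close>])
  fix m n assume mn: "m < N" "n < N"
  let ?P = "shift_map N q u aS bS d2"
  have y_hom: "?P (lmul_y N q u aT bT d1 f) = lmul_x N q u aS bS (?P f)" if "f \<in> carr N" for f
  proof -
    have "?P (lmul_y N q u aT bT d1 f) = (\<lambda>s. d1 * ?P (lmul_g N u f) s + ?P (lmul_x N q u aT bT f) s)"
      unfolding lmul_y_def lin_op_add[OF lin_op_shift_map] lin_op_scale[OF lin_op_shift_map] ..
    also have "\<dots> = lmul_x N q u aS bS (?P f)"
      using d unfolding g_hom[OF that] x_hom[OF that] lmul_y_def
      by (simp add: eq_neg_iff_add_eq_0[symmetric] add.commute)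
    finally show ?thesis .
  qed
  have "?P (shift_map N q u aT bT d1 (bas (m, n)))
      = ?P ((lmul_g N u ^^ m) ((lmul_y N q u aT bT d1 ^^ n) (bas (0, 0))))"
    using mn by (simp add: shift_map_bas)
  also have "\<dots> = (lmul_g N u ^^ m) (?P ((lmul_y N q u aT bT d1 ^^ n) (bas (0, 0))))"
    by (rule funpow_intertwine[where P = ?P and A = "lmul_g N u" and B = "lmul_g N u",
          OF g_hom lmul_g_in_carr lmul_y_funpow_in_carr[OF one_in_carr]])
  also have "?P ((lmul_y N q u aT bT d1 ^^ n) (bas (0, 0))) = (lmul_x N q u aS bS ^^ n) (bas (0, 0))"
    using funpow_intertwine[where P = ?P and A = "lmul_y N q u aT bT d1" and B = "lmul_x N q u aS bS",
        OF y_hom lmul_y_in_carr one_in_carr, of n] shift_map_one by simp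
  also have "\<dots> = bas (0, n)" using mn(2) by (rule lmul_x_funpow_one)
  also have "(lmul_g N u ^^ m) (bas (0, n)) = bas (m, n)"
    using lmul_g_funpow_bas[of 0 m N n u] mn by simp
  finally show "?P (shift_map N q u aT bT d1 (bas (m, n))) = bas (m, n)" .
qed

text \<open>Left multiplication commutes with right multiplication: associativity of \<open>B\<^sub>(\<^sub>u\<^sub>,\<^sub>a\<^sub>,\<^sub>0\<^sub>)\<close>.\<close>
lemma Bmult_lmul_g:
  assumes "g \<in> carr N" "k \<in> carr N"
  shows "Bmult N q u a 0 (lmul_g N u g) k = lmul_g N u (Bmult N q u a 0 g k)"
proof (rule lin_op_eq_on_carr[OF lin_op_comp[OF lin_op_Bmult_left lin_op_lmul_g]
      lin_op_comp[OF lin_op_lmul_g lin_op_Bmult_left] _ assms(1)])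
  fix m n assume mn: "m < N" "n < N"
  let ?G = "lmul_g N u" and ?X = "lmul_x N q u a 0"
  show "Bmult N q u a 0 (?G (bas (m, n))) k = ?G (Bmult N q u a 0 (bas (m, n)) k)"
  proof (cases "Suc m = N")
    case False
    then show ?thesis using mn by (simp add: lmul_g_bas Bmult_bas)
  next
    case True
    have "Bmult N q u a 0 (?G (bas (m, n))) k = (\<lambda>s. u * (?X ^^ n) k s)"
      using mn True N_pos by (simp add: lmul_g_bas lin_op_scale[OF lin_op_Bmult_left] Bmult_bas)
    also have "\<dots> = (?G ^^ N) ((?X ^^ n) k)"
      by (rule lmul_g_funpow_N[symmetric]) (rule lmul_x_funpow_in_carr[OF assms(2)])
    also have "\<dots> = ?G (Bmult N q u a 0 (bas (m, n)) k)"
      using mn True by (simp add: Bmult_bas del: funpow.simps) (metis funpow.simps(2) o_apply)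
    finally show ?thesis .
  qed
qed

lemma Bmult_lmul_x:
  assumes "g \<in> carr N" "k \<in> carr N"
  shows "Bmult N q u a 0 (lmul_x N q u a 0 g) k = lmul_x N q u a 0 (Bmult N q u a 0 g k)"
proof (rule lin_op_eq_on_carr[OF lin_op_comp[OF lin_op_Bmult_left lin_op_lmul_x]
      lin_op_comp[OF lin_op_lmul_x lin_op_Bmult_left] _ assms(1)])
  fix m n assume mn: "m < N" "n < N"
  let ?X = "lmul_x N q u a 0" and ?G = "lmul_g N u"
  have x_g: "\<And>f. f \<in> carr N \<Longrightarrow> ?X (?G f) = (\<lambda>s. q * ?G (?X f) s + 0 * ?G (?G f) s)"
    by (rule lmul_x_lmul_g)
  have rhs: "?X (Bmult N q u a 0 (bas (m, n)) k) = (\<lambda>s. q ^ m * (?G ^^ m) ((?X ^^ Suc n) k) s)"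
    using commute_funpow_lmul_g[OF x_g lmul_x_funpow_in_carr[OF assms(2)], of m n] mn
    by (simp add: Bmult_bas)
  show "Bmult N q u a 0 (?X (bas (m, n))) k = ?X (Bmult N q u a 0 (bas (m, n)) k)"
  proof (cases "Suc n = N")
    case True
    have "Bmult N q u a 0 (?X (bas (m, n))) k = (\<lambda>s. q ^ m * (a * (?G ^^ m) k s))"
      using mn True N_pos by (simp add: lmul_x_bas bas_mult_x_def lin_op_scale[OF lin_op_Bmult_left] Bmult_bas)
    also have "\<dots> = (\<lambda>s. q ^ m * (?G ^^ m) ((?X ^^ Suc n) k) s)"
      using True lmul_x0_funpow_N[OF assms(2)] by (simp add: lin_op_scale[OF lin_op_funpow[OF lin_op_lmul_g]])
    finally show ?thesis unfolding rhs .
  next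
    case False
    then show ?thesis unfolding rhs using mn
      by (simp add: lmul_x_bas bas_mult_x_def lin_op_scale[OF lin_op_Bmult_left] Bmult_bas del: funpow.simps)
  qed
qed

lemma Bmult_lmul_y:
  assumes "g \<in> carr N" "k \<in> carr N"
  shows "Bmult N q u a 0 (lmul_y N q u a 0 d g) k = lmul_y N q u a 0 d (Bmult N q u a 0 g k)"
  unfolding lmul_y_def lin_op_add[OF lin_op_Bmult_left] lin_op_scale[OF lin_op_Bmult_left]
    Bmult_lmul_g[OF assms] Bmult_lmul_x[OF assms] ..

lemma shift_map_mult:
  assumes "b = d * (1 - q)" and "f \<in> carr N" and "h \<in> carr N"
  shows "shift_map N q u (a - d ^ N * u) 0 d (Bmult N q u a b f h) =
    Bmult N q u (a - d ^ N * u) 0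
      (shift_map N q u (a - d ^ N * u) 0 d f) (shift_map N q u (a - d ^ N * u) 0 d h)"
proof -
  let ?a = "a - d ^ N * u"
  let ?P = "shift_map N q u ?a 0 d" and ?G = "lmul_g N u" and ?X = "lmul_x N q u a b"
    and ?Y = "lmul_y N q u ?a 0 d"
  let ?M = "\<lambda>g. Bmult N q u ?a 0 g (?P h)"
  note x_hom = shift_map_lmul_x_b0[OF assms(1)]
  have image: "?P ((?G ^^ m) ((?X ^^ n) h)) = (?G ^^ m) ((?Y ^^ n) (?P h))" for m n
  proof -
    have "?P ((?G ^^ m) ((?X ^^ n) h)) = (?G ^^ m) (?P ((?X ^^ n) h))"
      by (rule funpow_intertwine[where P = ?P and A = ?G and B = ?G,
            OF shift_map_lmul_g lmul_g_in_carr lmul_x_funpow_in_carr[OF assms(3)]])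
    also have "?P ((?X ^^ n) h) = (?Y ^^ n) (?P h)"
      by (rule funpow_intertwine[where P = ?P and A = ?X and B = ?Y, OF x_hom lmul_x_in_carr assms(3)])
    finally show ?thesis .
  qed
  have product: "?M (?P (bas p)) = (?G ^^ fst p) ((?Y ^^ snd p) (?P h))" if "p \<in> box N" for p
  proof -
    have "?M (?P (bas p)) = ?M ((?G ^^ fst p) ((?Y ^^ snd p) (bas (0, 0))))"
      using that by (simp add: shift_map_bas)
    also have "\<dots> = (?G ^^ fst p) (?M ((?Y ^^ snd p) (bas (0, 0))))"
      by (rule funpow_intertwine[where P = ?M and A = ?G and B = ?G,
            OF Bmult_lmul_g[OF _ shift_map_in_carr] lmul_g_in_carr lmul_y_funpow_in_carr[OF one_in_carr]])
    also have "?M ((?Y ^^ snd p) (bas (0, 0))) = (?Y ^^ snd p) (?M (bas (0, 0)))"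
      by (rule funpow_intertwine[where P = ?M and A = ?Y and B = ?Y,
            OF Bmult_lmul_y[OF _ shift_map_in_carr] lmul_y_in_carr one_in_carr])
    also have "?M (bas (0, 0)) = ?P h" using N_pos by (simp add: Bmult_bas)
    finally show ?thesis .
  qed
  have "?P (Bmult N q u a b f h) = (\<lambda>s. \<Sum>p\<in>box N. f p * ?P ((?G ^^ fst p) ((?X ^^ snd p) h)) s)"
    unfolding Bmult_def lmul_g_def[symmetric] lmul_x_def[symmetric] by (rule lin_op_sum[OF lin_op_shift_map])
  also have "\<dots> = (\<lambda>s. \<Sum>p\<in>box N. f p * ?M (?P (bas p)) s)"
    by (intro ext sum.cong refl) (simp add: image product)
  also have "\<dots> = ?M (?P f)"
    unfolding lin_op_apply_carr[OF lin_op_shift_map assms(2)]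
    by (rule lin_op_sum[OF lin_op_Bmult_left, symmetric])
  finally show ?thesis .
qed

end

section \<open>Tensor products of operators and the coaction\<close>

definition tensor_op :: "nat \<Rightarrow> ((nat \<times> nat \<Rightarrow> 'a::comm_ring_1) \<Rightarrow> nat \<times> nat \<Rightarrow> 'a)
    \<Rightarrow> ((nat \<times> nat \<Rightarrow> 'a) \<Rightarrow> nat \<times> nat \<Rightarrow> 'a)
    \<Rightarrow> ((nat \<times> nat) \<times> (nat \<times> nat) \<Rightarrow> 'a) \<Rightarrow> (nat \<times> nat) \<times> (nat \<times> nat) \<Rightarrow> 'a" where
  "tensor_op N A B = (\<lambda>F z. \<Sum>x\<in>box N \<times> box N. F x * A (bas (fst x)) (fst z) * B (bas (snd x)) (snd z))"

abbreviation tens_one :: "(nat \<times> nat) \<times> (nat \<times> nat) \<Rightarrow> 'a::comm_ring_1" where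
  "tens_one \<equiv> tens (bas (0, 0)) (bas (0, 0))"

lemma tens_apply: "tens f h z = f (fst z) * h (snd z)"
  by (cases z) (simp add: tens_def)

lemma tens_bas: "tens (bas p) (bas r) = delta (p, r)"
  by (rule ext) (auto simp: tens_apply bas_def delta_def)

lemma carrD: "f \<in> carr N \<Longrightarrow> p \<notin> box N \<Longrightarrow> f p = 0"
  unfolding carr_def by blast

lemma tens_in_supp:
  assumes "g \<in> carr N" "h \<in> carr N"
  shows "tens g h \<in> supp_in (box N \<times> box N)"
proof -
  have "g (fst z) * h (snd z) = 0" if "z \<notin> box N \<times> box N" for z
  proof -
    from that have "fst z \<notin> box N \<or> snd z \<notin> box N" by (auto simp: mem_Times_iff)
    then show ?thesis by (elim disjE) (simp_all add: carrD[OF assms(1)] carrD[OF assms(2)])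
  qed
  then show ?thesis unfolding supp_in_def tens_apply by blast
qed

lemma tensor_op_in_supp:
  assumes "\<And>p. p \<in> box N \<Longrightarrow> A (bas p) \<in> carr N" "\<And>r. r \<in> box N \<Longrightarrow> B (bas r) \<in> carr N"
  shows "tensor_op N A B F \<in> supp_in (box N \<times> box N)"
  unfolding supp_in_def
proof (intro CollectI allI impI)
  fix z :: "(nat \<times> nat) \<times> nat \<times> nat"
  assume z: "z \<notin> box N \<times> box N"
  have "A (bas (fst x)) (fst z) * B (bas (snd x)) (snd z) = 0" if "x \<in> box N \<times> box N" for x
  proof -
    from that have "fst x \<in> box N" "snd x \<in> box N" by (auto simp: mem_Times_iff)
    moreover from z have "fst z \<notin> box N \<or> snd z \<notin> box N" by (auto simp: mem_Times_iff)
    ultimately show ?thesis by (elim disjE) (simp_all add: carrD[OF assms(1)] carrD[OF assms(2)])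
  qed
  then show "tensor_op N A B F z = 0" unfolding tensor_op_def by (simp add: mult.assoc)
qed

lemma lin_op_tensor_op: "lin_op (tensor_op N A B)"
  unfolding lin_op_def tensor_op_def by (simp add: algebra_simps sum.distrib sum_distrib_left)

lemma tensor_op_tens:
  assumes "lin_op A" "lin_op B" "g \<in> carr N" "h \<in> carr N"
  shows "tensor_op N A B (tens g h) = tens (A g) (B h)"
proof
  fix z :: "(nat \<times> nat) \<times> (nat \<times> nat)"
  have "tensor_op N A B (tens g h) z
      = (\<Sum>p\<in>box N. g p * A (bas p) (fst z)) * (\<Sum>r\<in>box N. h r * B (bas r) (snd z))"
    unfolding tensor_op_def tens_apply
    by (simp add: sum_product sum.cartesian_product prod.case_eq_if algebra_simps)
  then show "tensor_op N A B (tens g h) z = tens (A g) (B h) z"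
    using lin_op_apply_carr[OF assms(1,3)] lin_op_apply_carr[OF assms(2,4)] by (simp add: tens_apply)
qed

lemma lin_op_eq_on_supp_tens:
  assumes "lin_op A" "lin_op B"
    and "\<And>p r. p \<in> box N \<Longrightarrow> r \<in> box N \<Longrightarrow> A (tens (bas p) (bas r)) = B (tens (bas p) (bas r))"
    and "F \<in> supp_in (box N \<times> box N)"
  shows "A F = B F"
  by (rule lin_op_eqI[OF _ assms(1,2) _ assms(4)]) (use assms(3) finite_box in \<open>auto simp: tens_bas\<close>)

lemma tensor_op_comp:
  assumes "lin_op A" "lin_op B" "lin_op C" "lin_op D"
    and "\<And>p. p \<in> box N \<Longrightarrow> C (bas p) \<in> carr N" "\<And>r. r \<in> box N \<Longrightarrow> D (bas r) \<in> carr N"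
    and "F \<in> supp_in (box N \<times> box N)"
  shows "tensor_op N A B (tensor_op N C D F) = tensor_op N (\<lambda>f. A (C f)) (\<lambda>f. B (D f)) F"
proof (rule lin_op_eq_on_supp_tens[OF lin_op_comp[OF lin_op_tensor_op lin_op_tensor_op]
      lin_op_tensor_op _ assms(7)])
  fix p r assume "p \<in> box N" "r \<in> box N"
  then show "tensor_op N A B (tensor_op N C D (tens (bas p) (bas r)))
      = tensor_op N (\<lambda>f. A (C f)) (\<lambda>f. B (D f)) (tens (bas p) (bas r))"
    by (simp add: tensor_op_tens bas_in_carr assms lin_op_comp)
qed

lemma tensor_op_cong:
  assumes "\<And>p. p \<in> box N \<Longrightarrow> A (bas p) = A' (bas p)" "\<And>r. r \<in> box N \<Longrightarrow> B (bas r) = B' (bas r)"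
  shows "tensor_op N A B F = tensor_op N A' B' F"
  unfolding tensor_op_def using assms by (intro ext sum.cong refl) (auto simp: mem_Times_iff)

lemma tensor_op_add_left:
  "tensor_op N (\<lambda>f s. A f s + A' f s) B F = (\<lambda>z. tensor_op N A B F z + tensor_op N A' B F z)"
  unfolding tensor_op_def by (simp add: algebra_simps sum.distrib)

lemma tensor_op_scale_left: "tensor_op N (\<lambda>f s. c * A f s) B F = (\<lambda>z. c * tensor_op N A B F z)"
  unfolding tensor_op_def by (simp add: algebra_simps sum_distrib_left)

lemma tensor_op_scale_right: "tensor_op N A (\<lambda>f s. c * B f s) F = (\<lambda>z. c * tensor_op N A B F z)"
  unfolding tensor_op_def by (simp add: algebra_simps sum_distrib_left)

lemma tensor_op_id: "F \<in> supp_in (box N \<times> box N) \<Longrightarrow> tensor_op N (\<lambda>f. f) (\<lambda>f. f) F = F"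
  by (rule lin_op_eq_on_supp_tens[where N = N, OF lin_op_tensor_op lin_op_id])
     (simp_all add: tensor_op_tens[OF lin_op_id lin_op_id] bas_in_carr)

lemma tensor_op_funpow_0:
  assumes "F \<in> supp_in (box N \<times> box N)"
  shows "tensor_op N (A ^^ 0) (B ^^ 0) F = F"
proof -
  have "tensor_op N (A ^^ 0) (B ^^ 0) F = tensor_op N (\<lambda>f. f) (\<lambda>f. f) F"
    by (rule tensor_op_cong) simp_all
  with tensor_op_id[OF assms] show ?thesis by simp
qed

lemma tens_id_eq_tensor_op:
  assumes "F \<in> supp_in (box N \<times> box N)"
  shows "tens_id N \<phi> F = tensor_op N \<phi> (\<lambda>f. f) F"
proof
  fix z :: "(nat \<times> nat) \<times> (nat \<times> nat)"
  obtain s t where z: "z = (s, t)" by (cases z)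
  have inner: "(\<Sum>r\<in>box N. F (p, r) * \<phi> (bas p) s * bas r t) = F (p, t) * \<phi> (bas p) s" for p
  proof (cases "t \<in> box N")
    case True
    have "(\<Sum>r\<in>box N. F (p, r) * \<phi> (bas p) s * bas r t)
        = (\<Sum>r\<in>box N. if r = t then F (p, t) * \<phi> (bas p) s else 0)"
      by (rule sum.cong) (auto simp: bas_def)
    with True finite_box show ?thesis by simp
  next
    case False
    then have "(p, t) \<notin> box N \<times> box N" by (simp add: mem_Times_iff)
    with assms have "F (p, t) = 0" unfolding supp_in_def by blast
    moreover have "bas r t = (0::'a)" if "r \<in> box N" for r using False that by (auto simp: bas_def)
    ultimately show ?thesis by simp
  qed
  have "tensor_op N \<phi> (\<lambda>f. f) F z = (\<Sum>p\<in>box N. \<Sum>r\<in>box N. F (p, r) * \<phi> (bas p) s * bas r t)"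
    unfolding z tensor_op_def by (simp add: sum.cartesian_product prod.case_eq_if)
  then show "tens_id N \<phi> F z = tensor_op N \<phi> (\<lambda>f. f) F z"
    unfolding inner z tens_id_def by simp
qed

lemma tensor_op_funpow_tens:
  assumes "lin_op A" "\<And>f. f \<in> carr N \<Longrightarrow> A f \<in> carr N" "lin_op B" "\<And>f. f \<in> carr N \<Longrightarrow> B f \<in> carr N"
    and "g \<in> carr N" "h \<in> carr N"
  shows "(tensor_op N A B ^^ k) (tens g h) = tens ((A ^^ k) g) ((B ^^ k) h)"
  by (induction k)
     (simp_all add: tensor_op_tens assms(1,3) funpow_closed[where A = A, OF assms(2,5)]
       funpow_closed[where A = B, OF assms(4,6)])

definition lmul_bas :: "nat \<Rightarrow> 'a::comm_ring_1 \<Rightarrow> 'a \<Rightarrow> 'a \<Rightarrow> 'a \<Rightarrow> nat \<times> nat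
    \<Rightarrow> (nat \<times> nat \<Rightarrow> 'a) \<Rightarrow> nat \<times> nat \<Rightarrow> 'a" where
  "lmul_bas N q u a b p = (\<lambda>h. (lmul_g N u ^^ fst p) ((lmul_x N q u a b ^^ snd p) h))"

text \<open>Left multiplication by \<open>\<rho>(v\<^sub>x) = 1 \<otimes> x + v\<^sub>x \<otimes> g\<close> on \<open>B\<^sub>(\<^sub>u\<^sub>,\<^sub>a\<^sub>,\<^sub>b\<^sub>) \<otimes> H\<^sub>N\<^sup>q\<close>, and by the
  image \<open>\<rho>(v\<^sub>x + d v\<^sub>g)\<close>.\<close>
definition lmul_rho_x :: "nat \<Rightarrow> 'a::comm_ring_1 \<Rightarrow> 'a \<Rightarrow> 'a \<Rightarrow> 'a
    \<Rightarrow> ((nat \<times> nat) \<times> (nat \<times> nat) \<Rightarrow> 'a) \<Rightarrow> (nat \<times> nat) \<times> (nat \<times> nat) \<Rightarrow> 'a" where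
  "lmul_rho_x N q u a b = (\<lambda>F z. tensor_op N (lmul_x N q u a b) (lmul_g N 1) F z
      + tensor_op N (\<lambda>f. f) (lmul_x N q 1 0 0) F z)"

definition lmul_rho_y :: "nat \<Rightarrow> 'a::comm_ring_1 \<Rightarrow> 'a \<Rightarrow> 'a \<Rightarrow> 'a \<Rightarrow> 'a
    \<Rightarrow> ((nat \<times> nat) \<times> (nat \<times> nat) \<Rightarrow> 'a) \<Rightarrow> (nat \<times> nat) \<times> (nat \<times> nat) \<Rightarrow> 'a" where
  "lmul_rho_y N q u a b d = (\<lambda>F z. tensor_op N (lmul_y N q u a b d) (lmul_g N 1) F z
      + tensor_op N (\<lambda>f. f) (lmul_x N q 1 0 0) F z)"

lemma Tmult_eq:
  "Tmult N q u a b F G = (\<lambda>z. \<Sum>x\<in>box N \<times> box N.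
      F x * tensor_op N (lmul_bas N q u a b (fst x)) (lmul_bas N q 1 0 0 (snd x)) G z)"
proof
  fix z :: "(nat \<times> nat) \<times> (nat \<times> nat)"
  obtain s t where z: "z = (s, t)" by (cases z)
  have "Tmult N q u a b F G z = (\<Sum>x\<in>box N \<times> box N. \<Sum>y\<in>box N \<times> box N.
      F x * G y * lmul_bas N q u a b (fst x) (bas (fst y)) s * lmul_bas N q 1 0 0 (snd x) (bas (snd y)) t)"
    unfolding z Tmult_def prod.case_eq_if
    by (intro sum.cong refl) (auto simp: Bmult_bas lmul_bas_def mem_Times_iff)
  then show "Tmult N q u a b F G z = (\<Sum>x\<in>box N \<times> box N.
      F x * tensor_op N (lmul_bas N q u a b (fst x)) (lmul_bas N q 1 0 0 (snd x)) G z)"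
    unfolding z tensor_op_def by (simp add: sum_distrib_left mult.assoc)
qed

lemma Tmult_delta:
  assumes "x0 \<in> box N \<times> box N"
  shows "Tmult N q u a b (delta x0) G
    = tensor_op N (lmul_bas N q u a b (fst x0)) (lmul_bas N q 1 0 0 (snd x0)) G"
proof
  fix z
  let ?T = "\<lambda>x. tensor_op N (lmul_bas N q u a b (fst x)) (lmul_bas N q 1 0 0 (snd x)) G z"
  have "(\<Sum>x\<in>box N \<times> box N. delta x0 x * ?T x) = (\<Sum>x\<in>box N \<times> box N. if x = x0 then ?T x0 else 0)"
    by (rule sum.cong) (auto simp: delta_def)
  with assms finite_box show "Tmult N q u a b (delta x0) G z
      = tensor_op N (lmul_bas N q u a b (fst x0)) (lmul_bas N q 1 0 0 (snd x0)) G z"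
    unfolding Tmult_eq by simp
qed

lemma Tmult_add_left:
  "Tmult N q u a b (\<lambda>z. F1 z + F2 z) G = (\<lambda>z. Tmult N q u a b F1 G z + Tmult N q u a b F2 G z)"
  unfolding Tmult_eq by (simp add: algebra_simps sum.distrib)

lemma Tmult_rho_g: "2 \<le> N \<Longrightarrow> Tmult N q u a b rho_g = tensor_op N (lmul_g N u) (lmul_g N 1)"
  unfolding rho_g_def tens_bas
  by (rule ext) (subst Tmult_delta, auto simp: lmul_bas_def[abs_def])

lemma Tmult_rho_x: "2 \<le> N \<Longrightarrow> Tmult N q u a b rho_x = lmul_rho_x N q u a b"
  unfolding rho_x_def tens_bas Tmult_add_left
  by (rule ext) (simp add: Tmult_delta lmul_bas_def[abs_def] lmul_rho_x_def add.commute)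

lemma Tmult_tens_bas_g:
  "m < N \<Longrightarrow>
    Tmult N q u a b (tens (bas (m, 0)) (bas (m, 0))) = tensor_op N (lmul_g N u ^^ m) (lmul_g N 1 ^^ m)"
  unfolding tens_bas by (rule ext) (subst Tmult_delta, auto simp: lmul_bas_def[abs_def])

context taft_root
begin

lemma Tpow_rho_g: "m < N \<Longrightarrow> Tpow N q u a b rho_g m = tens (bas (m, 0)) (bas (m, 0))"
  unfolding Tpow_def Tmult_rho_g[OF two_le_N]
  using lmul_g_funpow_bas[of 0 m N 0 u] lmul_g_funpow_bas[of 0 m N 0 "1::'a"] N_pos
  by (simp add: tensor_op_funpow_tens lin_op_lmul_g lmul_g_in_carr one_in_carr)

lemma coact_eq:
  "coact N q u a b f = (\<lambda>z. \<Sum>p\<in>box N.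
     f p * tensor_op N (lmul_g N u ^^ fst p) (lmul_g N 1 ^^ fst p)
       ((lmul_rho_x N q u a b ^^ snd p) tens_one) z)"
  unfolding coact_def
proof (intro ext sum.cong refl)
  fix z and p :: "nat \<times> nat"
  assume "p \<in> box N"
  then have "fst p < N" by (cases p) simp
  then show "f p * Tmult N q u a b (Tpow N q u a b rho_g (fst p)) (Tpow N q u a b rho_x (snd p)) z =
      f p * tensor_op N (lmul_g N u ^^ fst p) (lmul_g N 1 ^^ fst p) ((lmul_rho_x N q u a b ^^ snd p) tens_one) z"
    by (simp only: Tpow_rho_g Tmult_tens_bas_g) (simp only: Tpow_def Tmult_rho_x[OF two_le_N])
qed

lemma tens_one_in_supp: "tens_one \<in> supp_in (box N \<times> box N)"
  by (rule tens_in_supp[OF one_in_carr one_in_carr])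

lemma lin_op_lmul_rho_x: "lin_op (lmul_rho_x N q u a b)"
  unfolding lmul_rho_x_def by (rule lin_op_plus[OF lin_op_tensor_op lin_op_tensor_op])

lemma lmul_rho_x_in_supp: "lmul_rho_x N q u a b F \<in> supp_in (box N \<times> box N)"
  unfolding lmul_rho_x_def
  by (intro supp_in_add tensor_op_in_supp) (simp_all add: lmul_x_in_carr lmul_g_in_carr bas_in_carr)

lemma lmul_rho_y_in_supp: "lmul_rho_y N q u a b d F \<in> supp_in (box N \<times> box N)"
  unfolding lmul_rho_y_def
  by (intro supp_in_add tensor_op_in_supp)
     (simp_all add: lmul_y_in_carr lmul_x_in_carr lmul_g_in_carr bas_in_carr)

lemma lmul_rho_x_funpow_in_supp:
  "(lmul_rho_x N q u a b ^^ n) tens_one \<in> supp_in (box N \<times> box N)"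
  by (rule funpow_closed) (simp_all add: lmul_rho_x_in_supp tens_one_in_supp)

lemma tensor_op_lmul_g_funpow:
  "Q \<in> supp_in (box N \<times> box N) \<Longrightarrow>
    (tensor_op N (lmul_g N u) (lmul_g N 1) ^^ m) Q = tensor_op N (lmul_g N u ^^ m) (lmul_g N 1 ^^ m) Q"
proof (induction m)
  case 0
  then show ?case by (simp add: tensor_op_id)
next
  case (Suc m)
  have "(tensor_op N (lmul_g N u) (lmul_g N 1) ^^ Suc m) Q
      = tensor_op N (lmul_g N u) (lmul_g N 1) (tensor_op N (lmul_g N u ^^ m) (lmul_g N 1 ^^ m) Q)"
    using Suc by simp
  also have "\<dots> = tensor_op N (\<lambda>f. lmul_g N u ((lmul_g N u ^^ m) f)) (\<lambda>f. lmul_g N 1 ((lmul_g N 1 ^^ m) f)) Q"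
    by (rule tensor_op_comp)
       (simp_all add: lin_op_lmul_g lin_op_funpow lmul_g_funpow_in_carr bas_in_carr Suc.prems)
  finally show ?case by (simp add: comp_def)
qed

lemma lmul_x0_lmul_g_funpow:
  "f \<in> carr N \<Longrightarrow>
    lmul_x N q u a 0 ((lmul_g N u ^^ m) f) = (\<lambda>s. q ^ m * (lmul_g N u ^^ m) (lmul_x N q u a 0 f) s)"
  using commute_funpow_lmul_g[of "lmul_x N q u a 0" u 0 f m] lmul_x_lmul_g[of _ u a 0] by simp

lemma lmul_rho_x_tensor_op_lmul_g_funpow:
  assumes Q: "Q \<in> supp_in (box N \<times> box N)"
  shows "lmul_rho_x N q u a 0 (tensor_op N (lmul_g N u ^^ m) (lmul_g N 1 ^^ m) Q)
    = (\<lambda>z. q ^ m * tensor_op N (lmul_g N u ^^ m) (lmul_g N 1 ^^ m) (lmul_rho_x N q u a 0 Q) z)"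
proof -
  let ?G = "lmul_g N u" and ?H = "lmul_g N (1::'a)"
    and ?X = "lmul_x N q u a 0" and ?XH = "lmul_x N q (1::'a) 0 0"
  let ?T = "tensor_op N (?G ^^ m) (?H ^^ m)"
  note lin = lin_op_lmul_g lin_op_lmul_x lin_op_id lin_op_funpow[OF lin_op_lmul_g]
  note carr = lmul_g_funpow_in_carr bas_in_carr lmul_x_in_carr lmul_g_in_carr
  have x_part: "tensor_op N ?X ?H (?T Q) = (\<lambda>z. q ^ m * ?T (tensor_op N ?X ?H Q) z)"
  proof -
    have "tensor_op N ?X ?H (?T Q) = tensor_op N (\<lambda>f. ?X ((?G ^^ m) f)) (\<lambda>f. ?H ((?H ^^ m) f)) Q"
      by (rule tensor_op_comp) (simp_all add: lin carr Q)
    also have "\<dots> = tensor_op N (\<lambda>f s. q ^ m * (?G ^^ m) (?X f) s) (\<lambda>f. (?H ^^ m) (?H f)) Q"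
      by (rule tensor_op_cong) (simp_all add: lmul_x0_lmul_g_funpow bas_in_carr funpow_swap1)
    also have "\<dots> = (\<lambda>z. q ^ m * ?T (tensor_op N ?X ?H Q) z)"
      unfolding tensor_op_scale_left by (subst tensor_op_comp) (simp_all add: lin carr Q)
    finally show ?thesis .
  qed
  have xh_part: "tensor_op N (\<lambda>f. f) ?XH (?T Q) = (\<lambda>z. q ^ m * ?T (tensor_op N (\<lambda>f. f) ?XH Q) z)"
  proof -
    have "tensor_op N (\<lambda>f. f) ?XH (?T Q) = tensor_op N (?G ^^ m) (\<lambda>f. ?XH ((?H ^^ m) f)) Q"
      using tensor_op_comp[of "\<lambda>f. f" ?XH "?G ^^ m" "?H ^^ m" N Q] by (simp add: lin carr Q)
    also have "\<dots> = tensor_op N (?G ^^ m) (\<lambda>f s. q ^ m * (?H ^^ m) (?XH f) s) Q"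
      by (rule tensor_op_cong) (simp_all add: lmul_x0_lmul_g_funpow bas_in_carr)
    also have "\<dots> = (\<lambda>z. q ^ m * ?T (tensor_op N (\<lambda>f. f) ?XH Q) z)"
      unfolding tensor_op_scale_right
      using tensor_op_comp[of "?G ^^ m" "?H ^^ m" "\<lambda>f. f" ?XH N Q] by (simp add: lin carr Q)
    finally show ?thesis .
  qed
  show ?thesis
    unfolding lmul_rho_x_def x_part xh_part lin_op_add[OF lin_op_tensor_op] by (simp add: algebra_simps)
qed

lemma lmul_rho_x_funpow_N: "(lmul_rho_x N q u a 0 ^^ N) tens_one = (\<lambda>z. a * tens_one z)"
proof -
  let ?H = "lmul_g N (1::'a)" and ?X = "lmul_x N q u a 0" and ?XH = "lmul_x N q (1::'a) 0 0"
  let ?A = "tensor_op N ?X ?H" and ?B = "tensor_op N (\<lambda>f. f) ?XH"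
  note lin = lin_op_lmul_g lin_op_lmul_x lin_op_id
  note carr = bas_in_carr lmul_x_in_carr lmul_g_in_carr
  have A_supp: "?A F \<in> supp_in (box N \<times> box N)" for F
    by (rule tensor_op_in_supp) (simp_all add: carr)
  have B_supp: "?B F \<in> supp_in (box N \<times> box N)" for F
    by (rule tensor_op_in_supp) (simp_all add: carr)
  have comm: "?B (?A F) = (\<lambda>z. q * ?A (?B F) z)" if F: "F \<in> supp_in (box N \<times> box N)" for F
  proof -
    have "?B (?A F) = tensor_op N ?X (\<lambda>f. ?XH (?H f)) F"
      using tensor_op_comp[of "\<lambda>f. f" ?XH ?X ?H N F] by (simp add: lin carr F)
    also have "\<dots> = tensor_op N ?X (\<lambda>f s. q * ?H (?XH f) s) F"
      by (rule tensor_op_cong) (simp_all add: lmul_x_lmul_g bas_in_carr)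
    also have "\<dots> = (\<lambda>z. q * ?A (?B F) z)"
      unfolding tensor_op_scale_right using tensor_op_comp[of ?X ?H "\<lambda>f. f" ?XH N F]
      by (simp add: lin carr F)
    finally show ?thesis .
  qed
  have "(lmul_rho_x N q u a 0 ^^ N) tens_one = ((\<lambda>g z. ?A g z + ?B g z) ^^ N) tens_one"
    by (simp add: lmul_rho_x_def)
  also have "\<dots> = (\<lambda>z. (?A ^^ N) tens_one z + (?B ^^ N) tens_one z)"
    by (rule q_binomial_funpow_root[OF lin_op_tensor_op _ lin_op_tensor_op _ comm tens_one_in_supp
          qbinom_vanish N_pos]) (simp_all add: A_supp B_supp)
  also have "(?A ^^ N) tens_one = tens ((?X ^^ N) (bas (0, 0))) ((?H ^^ N) (bas (0, 0)))"
    by (rule tensor_op_funpow_tens) (simp_all add: lin carr one_in_carr)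
  also have "(?B ^^ N) tens_one = tens (((\<lambda>f. f) ^^ N) (bas (0, 0))) ((?XH ^^ N) (bas (0, 0)))"
    by (rule tensor_op_funpow_tens) (simp_all add: lin carr one_in_carr)
  also have "((\<lambda>f. f) ^^ N) (bas (0, 0)) = bas (0, 0)"
    by (induction N) simp_all
  finally show ?thesis
    by (simp add: lmul_g_funpow_N lmul_x0_funpow_N one_in_carr tens_def case_prod_unfold mult.assoc)
qed

lemma lin_op_coact: "lin_op (coact N q u a b)"
  unfolding lin_op_def coact_def by (simp add: algebra_simps sum.distrib sum_distrib_left)

lemma coact_bas:
  "m < N \<Longrightarrow> n < N \<Longrightarrow>
    coact N q u a b (bas (m, n))
      = tensor_op N (lmul_g N u ^^ m) (lmul_g N 1 ^^ m) ((lmul_rho_x N q u a b ^^ n) tens_one)"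
  by (rule ext) (simp add: coact_eq sum_box_bas)

lemma coact_one: "coact N q u a b (bas (0, 0)) = tens_one"
  using coact_bas[of 0 0 u a b] N_pos tensor_op_funpow_0[OF tens_one_in_supp] by simp

lemma coact_in_supp: "coact N q u a b f \<in> supp_in (box N \<times> box N)"
  unfolding coact_eq
  by (intro supp_in_sum tensor_op_in_supp) (simp_all add: lmul_g_funpow_in_carr bas_in_carr)

lemma coact_lmul_g:
  assumes "g \<in> carr N"
  shows "coact N q u a b (lmul_g N u g) = tensor_op N (lmul_g N u) (lmul_g N 1) (coact N q u a b g)"
proof (rule lin_op_eq_on_carr[OF lin_op_comp[OF lin_op_coact lin_op_lmul_g]
      lin_op_comp[OF lin_op_tensor_op lin_op_coact] _ assms])
  fix m n assume mn: "m < N" "n < N"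
  let ?G = "lmul_g N u" and ?H = "lmul_g N (1::'a)" and ?Q = "(lmul_rho_x N q u a b ^^ n) tens_one"
  have "tensor_op N ?G ?H (coact N q u a b (bas (m, n)))
      = tensor_op N ?G ?H (tensor_op N (?G ^^ m) (?H ^^ m) ?Q)"
    using mn by (simp only: coact_bas)
  also have "\<dots> = tensor_op N (\<lambda>f. ?G ((?G ^^ m) f)) (\<lambda>f. ?H ((?H ^^ m) f)) ?Q"
    by (rule tensor_op_comp)
       (simp_all add: lin_op_lmul_g lin_op_funpow lmul_g_funpow_in_carr bas_in_carr lmul_rho_x_funpow_in_supp)
  finally have rhs: "tensor_op N ?G ?H (coact N q u a b (bas (m, n)))
      = tensor_op N (?G ^^ Suc m) (?H ^^ Suc m) ?Q"
    by (simp add: comp_def)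
  show "coact N q u a b (?G (bas (m, n))) = tensor_op N ?G ?H (coact N q u a b (bas (m, n)))"
  proof (cases "Suc m = N")
    case False
    then show ?thesis unfolding rhs using mn by (simp add: lmul_g_bas coact_bas del: funpow.simps)
  next
    case True
    have "coact N q u a b (?G (bas (m, n))) = (\<lambda>z. u * ?Q z)"
      using mn True N_pos
      by (simp add: lmul_g_bas lin_op_scale[OF lin_op_coact] coact_bas tensor_op_funpow_0
          lmul_rho_x_funpow_in_supp del: funpow.simps)
    also have "\<dots> = tensor_op N (\<lambda>f s. u * f s) (\<lambda>f. f) ?Q"
      unfolding tensor_op_scale_left tensor_op_id[OF lmul_rho_x_funpow_in_supp] ..
    also have "\<dots> = tensor_op N (?G ^^ N) (?H ^^ N) ?Q"
      by (rule tensor_op_cong) (simp_all add: lmul_g_funpow_N bas_in_carr)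
    finally show ?thesis unfolding rhs True .
  qed
qed

lemma coact_lmul_x:
  assumes "g \<in> carr N"
  shows "coact N q u a 0 (lmul_x N q u a 0 g) = lmul_rho_x N q u a 0 (coact N q u a 0 g)"
proof (rule lin_op_eq_on_carr[OF lin_op_comp[OF lin_op_coact lin_op_lmul_x]
      lin_op_comp[OF lin_op_lmul_rho_x lin_op_coact] _ assms])
  fix m n assume mn: "m < N" "n < N"
  let ?T = "tensor_op N (lmul_g N u ^^ m) (lmul_g N 1 ^^ m)" and ?P = "lmul_rho_x N q u a 0"
  have rhs: "?P (coact N q u a 0 (bas (m, n))) = (\<lambda>z. q ^ m * ?T ((?P ^^ Suc n) tens_one) z)"
    using mn by (simp add: coact_bas lmul_rho_x_tensor_op_lmul_g_funpow lmul_rho_x_funpow_in_supp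
        del: funpow.simps) simp
  show "coact N q u a 0 (lmul_x N q u a 0 (bas (m, n))) = ?P (coact N q u a 0 (bas (m, n)))"
  proof (cases "Suc n = N")
    case False
    then show ?thesis unfolding rhs using mn
      by (simp add: lmul_x_bas bas_mult_x_def lin_op_scale[OF lin_op_coact] coact_bas del: funpow.simps)
  next
    case True
    have "coact N q u a 0 (lmul_x N q u a 0 (bas (m, n))) = (\<lambda>z. q ^ m * (a * ?T tens_one z))"
      using mn True N_pos
      by (simp add: lmul_x_bas bas_mult_x_def lin_op_scale[OF lin_op_coact] coact_bas del: funpow.simps)
    also have "\<dots> = (\<lambda>z. q ^ m * ?T ((?P ^^ Suc n) tens_one) z)"
      unfolding True lmul_rho_x_funpow_N lin_op_scale[OF lin_op_tensor_op] ..
    finally show ?thesis unfolding rhs .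
  qed
qed

lemma lmul_rho_y_eq:
  "lmul_rho_y N q u a 0 d F = (\<lambda>z. d * tensor_op N (lmul_g N u) (lmul_g N 1) F z + lmul_rho_x N q u a 0 F z)"
  unfolding lmul_rho_y_def lmul_rho_x_def lmul_y_def tensor_op_add_left tensor_op_scale_left
  by (simp add: algebra_simps)

lemma coact_lmul_y:
  assumes "g \<in> carr N"
  shows "coact N q u a 0 (lmul_y N q u a 0 d g) = lmul_rho_y N q u a 0 d (coact N q u a 0 g)"
  unfolding lmul_y_def lin_op_add[OF lin_op_coact] lin_op_scale[OF lin_op_coact]
    coact_lmul_g[OF assms] coact_lmul_x[OF assms] lmul_rho_y_eq ..

lemma coact_shift_map:
  assumes "f \<in> carr N"
  shows "coact N q u a 0 (shift_map N q u a 0 d f) = (\<lambda>z. \<Sum>p\<in>box N. f p *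
    tensor_op N (lmul_g N u ^^ fst p) (lmul_g N 1 ^^ fst p) ((lmul_rho_y N q u a 0 d ^^ snd p) tens_one) z)"
proof -
  let ?G = "lmul_g N u" and ?H = "lmul_g N (1::'a)" and ?Y = "lmul_y N q u a 0 d"
    and ?R = "lmul_rho_y N q u a 0 d" and ?C = "coact N q u a 0"
  have "?C (shift_map N q u a 0 d (bas p)) = tensor_op N (?G ^^ fst p) (?H ^^ fst p) ((?R ^^ snd p) tens_one)"
    if "p \<in> box N" for p
  proof -
    have "?C (shift_map N q u a 0 d (bas p)) = ?C ((?G ^^ fst p) ((?Y ^^ snd p) (bas (0, 0))))"
      using that by (simp add: shift_map_bas)
    also have "\<dots> = (tensor_op N ?G ?H ^^ fst p) (?C ((?Y ^^ snd p) (bas (0, 0))))"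
      by (rule funpow_intertwine[where P = ?C and A = ?G and B = "tensor_op N ?G ?H",
            OF coact_lmul_g lmul_g_in_carr lmul_y_funpow_in_carr[OF one_in_carr]])
    also have "?C ((?Y ^^ snd p) (bas (0, 0))) = (?R ^^ snd p) tens_one"
      using funpow_intertwine[where P = ?C and A = ?Y and B = ?R, OF coact_lmul_y lmul_y_in_carr one_in_carr]
      by (simp add: coact_one)
    also have "(tensor_op N ?G ?H ^^ fst p) ((?R ^^ snd p) tens_one)
        = tensor_op N (?G ^^ fst p) (?H ^^ fst p) ((?R ^^ snd p) tens_one)"
      by (rule tensor_op_lmul_g_funpow, rule funpow_closed)
         (simp_all add: lmul_rho_y_in_supp tens_one_in_supp)
    finally show ?thesis .
  qed
  then show ?thesis
    unfolding lin_op_apply_carr[OF lin_op_shift_map assms] lin_op_sum[OF lin_op_coact]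
    by (intro ext sum.cong refl) simp
qed

lemma tensor_op_shift_map_one: "tensor_op N (shift_map N q u a b d) (\<lambda>f. f) tens_one = tens_one"
  by (simp add: tensor_op_tens lin_op_shift_map lin_op_id one_in_carr shift_map_one)

lemma tensor_op_shift_map_lmul_g_funpow:
  assumes "Q \<in> supp_in (box N \<times> box N)"
  shows "tensor_op N (shift_map N q u a b d) (\<lambda>f. f) (tensor_op N (lmul_g N u ^^ m) (lmul_g N 1 ^^ m) Q)
    = tensor_op N (lmul_g N u ^^ m) (lmul_g N 1 ^^ m) (tensor_op N (shift_map N q u a b d) (\<lambda>f. f) Q)"
proof -
  let ?P = "shift_map N q u a b d" and ?G = "lmul_g N u" and ?H = "lmul_g N (1::'a)"
  note lin = lin_op_shift_map lin_op_id lin_op_funpow[OF lin_op_lmul_g]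
  note carr = lmul_g_funpow_in_carr bas_in_carr shift_map_in_carr assms
  have "tensor_op N ?P (\<lambda>f. f) (tensor_op N (?G ^^ m) (?H ^^ m) Q)
      = tensor_op N (\<lambda>f. ?P ((?G ^^ m) f)) (\<lambda>f. (?H ^^ m) f) Q"
    by (rule tensor_op_comp) (simp_all add: lin carr)
  also have "\<dots> = tensor_op N (\<lambda>f. (?G ^^ m) (?P f)) (\<lambda>f. (?H ^^ m) f) Q"
    by (rule tensor_op_cong) (simp_all add: bas_in_carr funpow_intertwine[where P = ?P and A = ?G and B = ?G,
          OF shift_map_lmul_g lmul_g_in_carr])
  also have "\<dots> = tensor_op N (?G ^^ m) (?H ^^ m) (tensor_op N ?P (\<lambda>f. f) Q)"
    by (rule tensor_op_comp[symmetric]) (simp_all add: lin carr)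
  finally show ?thesis .
qed

lemma tensor_op_shift_map_lmul_rho_x:
  assumes x_hom: "\<And>g. g \<in> carr N \<Longrightarrow>
      shift_map N q u a2 b2 d (lmul_x N q u a1 b1 g) = lmul_y N q u a2 b2 d (shift_map N q u a2 b2 d g)"
    and F: "F \<in> supp_in (box N \<times> box N)"
  shows "tensor_op N (shift_map N q u a2 b2 d) (\<lambda>f. f) (lmul_rho_x N q u a1 b1 F)
    = lmul_rho_y N q u a2 b2 d (tensor_op N (shift_map N q u a2 b2 d) (\<lambda>f. f) F)"
proof -
  let ?P = "shift_map N q u a2 b2 d" and ?H = "lmul_g N (1::'a)" and ?XH = "lmul_x N q (1::'a) 0 0"
  note lin = lin_op_shift_map lin_op_id lin_op_lmul_x lin_op_lmul_g lin_op_lmul_y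
  note carr = lmul_x_in_carr lmul_g_in_carr bas_in_carr shift_map_in_carr F
  have "tensor_op N ?P (\<lambda>f. f) (tensor_op N (lmul_x N q u a1 b1) ?H F)
      = tensor_op N (\<lambda>f. ?P (lmul_x N q u a1 b1 f)) ?H F"
    using tensor_op_comp[of ?P "\<lambda>f. f" "lmul_x N q u a1 b1" ?H N F] by (simp add: lin carr)
  also have "\<dots> = tensor_op N (\<lambda>f. lmul_y N q u a2 b2 d (?P f)) ?H F"
    by (rule tensor_op_cong) (simp_all add: x_hom bas_in_carr)
  also have "\<dots> = tensor_op N (lmul_y N q u a2 b2 d) ?H (tensor_op N ?P (\<lambda>f. f) F)"
    using tensor_op_comp[of "lmul_y N q u a2 b2 d" ?H ?P "\<lambda>f. f" N F] by (simp add: lin carr)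
  finally have x_part: "tensor_op N ?P (\<lambda>f. f) (tensor_op N (lmul_x N q u a1 b1) ?H F)
      = tensor_op N (lmul_y N q u a2 b2 d) ?H (tensor_op N ?P (\<lambda>f. f) F)" .
  have "tensor_op N ?P (\<lambda>f. f) (tensor_op N (\<lambda>f. f) ?XH F) = tensor_op N ?P ?XH F"
    using tensor_op_comp[of ?P "\<lambda>f. f" "\<lambda>f. f" ?XH N F] by (simp add: lin carr)
  also have "\<dots> = tensor_op N (\<lambda>f. f) ?XH (tensor_op N ?P (\<lambda>f. f) F)"
    using tensor_op_comp[of "\<lambda>f. f" ?XH ?P "\<lambda>f. f" N F] by (simp add: lin carr)
  finally show ?thesis
    unfolding lmul_rho_x_def lmul_rho_y_def lin_op_add[OF lin_op_tensor_op] x_part by simp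
qed

lemma tens_id_coact:
  assumes x_hom: "\<And>g. g \<in> carr N \<Longrightarrow>
      shift_map N q u a2 b2 d (lmul_x N q u a1 b1 g) = lmul_y N q u a2 b2 d (shift_map N q u a2 b2 d g)"
  shows "tens_id N (shift_map N q u a2 b2 d) (coact N q u a1 b1 f) = (\<lambda>z. \<Sum>p\<in>box N. f p *
    tensor_op N (lmul_g N u ^^ fst p) (lmul_g N 1 ^^ fst p) ((lmul_rho_y N q u a2 b2 d ^^ snd p) tens_one) z)"
proof -
  let ?T = "tensor_op N (shift_map N q u a2 b2 d) (\<lambda>f. f)"
  have rho: "?T ((lmul_rho_x N q u a1 b1 ^^ n) tens_one) = (lmul_rho_y N q u a2 b2 d ^^ n) (?T tens_one)"
    for n
    by (rule funpow_intertwine[where P = ?T and B = "lmul_rho_y N q u a2 b2 d",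
          OF tensor_op_shift_map_lmul_rho_x[OF x_hom] lmul_rho_x_in_supp tens_one_in_supp])
  have "tens_id N (shift_map N q u a2 b2 d) (coact N q u a1 b1 f) = ?T (coact N q u a1 b1 f)"
    by (rule tens_id_eq_tensor_op[OF coact_in_supp])
  also have "\<dots> = (\<lambda>z. \<Sum>p\<in>box N. f p * ?T (tensor_op N (lmul_g N u ^^ fst p) (lmul_g N 1 ^^ fst p)
      ((lmul_rho_x N q u a1 b1 ^^ snd p) tens_one)) z)"
    unfolding coact_eq by (rule lin_op_sum[OF lin_op_tensor_op])
  finally show ?thesis
    by (simp add: tensor_op_shift_map_lmul_g_funpow lmul_rho_x_funpow_in_supp rho tensor_op_shift_map_one)
qed

lemma shift_map_comod_alg_iso:
  assumes "b = d * (1 - q)"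
  shows "comod_alg_iso N q (u, a, b) (u, a - d ^ N * u, 0) (shift_map N q u (a - d ^ N * u) 0 d)"
proof -
  let ?a = "a - d ^ N * u"
  let ?\<phi> = "shift_map N q u ?a 0 d" and ?\<psi> = "shift_map N q u a b (- d)"
  note \<phi>_x = shift_map_lmul_x_b0[OF assms]
  have \<psi>_x: "\<And>f. f \<in> carr N \<Longrightarrow> ?\<psi> (lmul_x N q u ?a 0 f) = lmul_y N q u a b (- d) (?\<psi> f)"
    by (rule shift_map_lmul_x) (use assms lmul_y_funpow_N[OF assms] in auto)
  have "bij_betw ?\<phi> (carr N) (carr N)"
    by (rule bij_betw_byWitness[where f' = ?\<psi>])
       (auto simp: shift_map_inverse[OF _ shift_map_lmul_g \<psi>_x] shift_map_inverse[OF _ shift_map_lmul_g \<phi>_x]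
         shift_map_in_carr)
  then show ?thesis
    unfolding comod_alg_iso_def
    by (simp add: lin_op_add[OF lin_op_shift_map] lin_op_scale[OF lin_op_shift_map] shift_map_one
        shift_map_mult[OF assms] coact_shift_map tens_id_coact[OF \<phi>_x])
qed

end

theorem corollary1p6:
  fixes N :: nat and q u a b :: "'a::comm_ring_1"
  assumes "N \<ge> 2"
    and "poly (map_poly of_int (cyclo N)) q = 0"
    and "u dvd 1"
    and "(1 - q) dvd 1"
  shows "\<exists>a' \<phi>. comod_alg_iso N q (u, a, b) (u, a', 0) \<phi>"
proof -
  interpret taft_root N q
    using assms(1) qbinom_cyclo_root_eq_0[OF _ assms(2)] by unfold_locales auto
  obtain w where "1 = (1 - q) * w" using assms(4) by (elim dvdE)
  then have "b = b * w * (1 - q)" by (metis mult.commute mult.left_commute mult_1_right)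
  then show ?thesis using shift_map_comod_alg_iso by blast
qed

end
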